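(* Let $\mathcal D$, $f(\cdot;\xi)$, $F$, $F^\star$ and the DiSK iteration (with SGD base update) be as described in the context, suppose Assumptions (A1)–(A3) hold, fix $\sigma_{\mathrm{DP}}^2>0$, and choose $C\ge\left(1+\frac{2(1-\kappa)}{\kappa}\right)G$. Take $\gamma=-1$ and $$M_\kappa=\frac{\|\nabla F(x_0)\|^2}{2L(F(x_0)-F^\star)}\le 1,$$ $$\eta=\min\left\{\frac{1}{L\left(2+4/M_\kappa-M_\kappa\right)},\ \frac{1}{M_\kappa L}\sqrt{\frac{2M_\kappa L(F(x_0)-F^\star)+\|\nabla F(x_0)\|^2}{2Td\sigma_{\mathrm{DP}}^2}}\right\},$$ $$\kappa=M_\kappa L\eta\le 1,\qquad \beta=\frac{\eta(1-\kappa)/2+\eta^2L(1-\kappa)^2(1+4\eta^2L^2)}{1-(1-\kappa)^2(1+4\eta^2L^2)}\le\frac{1}{2M_\kappa L},$$ $$B\ge\max\left\{1,\frac{2\sigma_{\mathrm{SGD}}^2}{d\sigma_{\mathrm{DP}}^2}\right\},$$ and suppose moreover that these satisfy $\eta<\frac{1+\kappa}{2L(1+4(1-\kappa)^2\beta L)}$, $\kappa>1-\frac{1}{\sqrt{1+4\eta^2L^2}}$ and $M_1:=(1+\kappa-2\eta L)-8(\beta+\eta^2L)(1-\kappa)^2L^2\eta>0$. If $$T\ge\frac{2L(F(x_0)-F^\star)\left(\frac{16}{M_\kappa^3}+\frac{16}{M_\kappa^2}-\frac{4}{M_\kappa}-4\right)+\|\nabla F(x_0)\|^2}{d\sigma_{\mathrm{DP}}^2},$$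 then after running $T$ iterations, $$\frac1T\sum_{t=0}^{T}\mathbb E\|\nabla F(x_t)\|^2\le 8\sqrt{\frac{M_\kappa L(F(x_0)-F^\star)d\sigma_{\mathrm{DP}}^2}{T}}.$$
   Context: Let $\mathcal D=\{\xi_1,\dots,\xi_N\}$ be a finite dataset, $f(\cdot;\xi):\mathbb R^d\to\mathbb R$ differentiable loss functions, $F(x)=\frac1N\sum_{\xi\in\mathcal D}f(x;\xi)$, and $F^\star=\inf_x F(x)$ (assumed finite, with $F(x_0)>F^\star$). For $v\in\mathbb R^d$, $\mathrm{clip}(v,C)=\min\{1,C/\|v\|\}\,v$. DiSK iteration with SGD base update, parameters $x_0\in\mathbb R^d$, step size $\eta>0$, $\gamma\neq0$, $\kappa\in(0,1]$, clipping threshold $C>0$, noise level $\sigma_{\mathrm{DP}}\ge0$, batch size $B\ge1$: initialize $\tilde g_{-1}=0$, $d_{-1}=0$; for $t=0,1,\dots$: draw a minibatch $\mathcal B_t$ of $B$ samples uniformly at random from $\mathcal D$ (independently of the past), set $a=\frac{1-\kappa}{\kappa\gamma}$ and $g_t=\frac1B\sum_{\xi\in\mathcal B_t}\mathrm{clip}\big(a\nabla f(x_t+\gamma d_{t-1};\xi)+(1-a)\nabla f(x_t;\xi),C\big)+w_t$ with $w_t\sim\mathcal N(0,\sigma_{\mathrm{DP}}^2I_d)$ independent of everything else; $\tilde g_t=(1-\kappa)\tilde g_{t-1}+\kappa g_t$; $x_{t+1}=x_t-\eta\tilde g_t$; $d_t=x_{t+1}-x_t$. Expectations are over all randomness. Assumptions: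 (A1) each $f(\cdot;\xi)$ is $L$-smooth: $\|\nabla f(x;\xi)-\nabla f(y;\xi)\|\le L\|x-y\|$ for all $x,y,\xi$; (A2) $\frac1N\sum_{\xi\in\mathcal D}\|\nabla f(x;\xi)-\nabla F(x)\|^2\le\sigma_{\mathrm{SGD}}^2$ for all $x$; (A3) $\|\nabla f(x;\xi)\|\le G$ for all $x,\xi$. *)

theory Defs
  imports "HOL-Probability.Probability"
begin

text \<open>Dataset indexed by {..<N}; vectors in R^d are real^'n with d = CARD('n).\<close>

definition clip :: "real^'n \<Rightarrow> real \<Rightarrow> real^'n" where
  "clip v C = min 1 (C / norm v) *\<^sub>R v"

definition Floss :: "nat \<Rightarrow> (nat \<Rightarrow> real^'n \<Rightarrow> real) \<Rightarrow> real^'n \<Rightarrow> real" where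
  "Floss N f x = (1 / real N) * (\<Sum>i<N. f i x)"

definition gradF :: "nat \<Rightarrow> (nat \<Rightarrow> real^'n \<Rightarrow> real^'n) \<Rightarrow> real^'n \<Rightarrow> real^'n" where
  "gradF N gf x = (1 / real N) *\<^sub>R (\<Sum>i<N. gf i x)"

definition Fstar :: "nat \<Rightarrow> (nat \<Rightarrow> real^'n \<Rightarrow> real) \<Rightarrow> real" where
  "Fstar N f = Inf (range (Floss N f))"

definition batch_space :: "nat \<Rightarrow> nat \<Rightarrow> (nat \<Rightarrow> nat) measure" where
  "batch_space N B = PiM {..<B} (\<lambda>_. measure_pmf (pmf_of_set {..<N}))"

definition gauss_space :: "real \<Rightarrow> ('n::finite \<Rightarrow> real) measure" where
  "gauss_space \<sigma> = PiM UNIV (\<lambda>_. density lborel (normal_density 0 \<sigma>))"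

definition step_space :: "nat \<Rightarrow> nat \<Rightarrow> real \<Rightarrow> ((nat \<Rightarrow> nat) \<times> ('n::finite \<Rightarrow> real)) measure" where
  "step_space N B \<sigma> = batch_space N B \<Otimes>\<^sub>M gauss_space \<sigma>"

definition omega_space :: "nat \<Rightarrow> nat \<Rightarrow> real \<Rightarrow> (nat \<Rightarrow> (nat \<Rightarrow> nat) \<times> ('n::finite \<Rightarrow> real)) measure" where
  "omega_space N B \<sigma> = PiM UNIV (\<lambda>_. step_space N B \<sigma>)"

text \<open>DiSK with SGD base update. State at time t: (x_t, gtilde_{t-1}, d_{t-1}).\<close>
fun disk_state :: "(nat \<Rightarrow> real^'n \<Rightarrow> real^'n) \<Rightarrow> real^'n \<Rightarrow> real \<Rightarrow> real \<Rightarrow> real \<Rightarrow> real \<Rightarrow> nat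
     \<Rightarrow> (nat \<Rightarrow> (nat \<Rightarrow> nat) \<times> ('n::finite \<Rightarrow> real)) \<Rightarrow> nat \<Rightarrow> (real^'n) \<times> (real^'n) \<times> (real^'n)" where
  "disk_state gf x0 \<eta> \<gamma> \<kappa> C B \<omega> 0 = (x0, 0, 0)"
| "disk_state gf x0 \<eta> \<gamma> \<kappa> C B \<omega> (Suc t) =
     (let (x, gt, dd) = disk_state gf x0 \<eta> \<gamma> \<kappa> C B \<omega> t;
          bat = fst (\<omega> t); w = snd (\<omega> t);
          a = (1 - \<kappa>) / (\<kappa> * \<gamma>);
          g = (1 / real B) *\<^sub>R (\<Sum>j<B. clip (a *\<^sub>R gf (bat j) (x + \<gamma> *\<^sub>R dd) + (1 - a) *\<^sub>R gf (bat j) x) C)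
              + (\<chi> k. w k);
          gt' = (1 - \<kappa>) *\<^sub>R gt + \<kappa> *\<^sub>R g;
          x' = x - \<eta> *\<^sub>R gt'
      in (x', gt', x' - x))"

definition disk_x where
  "disk_x gf x0 \<eta> \<gamma> \<kappa> C B \<omega> t = fst (disk_state gf x0 \<eta> \<gamma> \<kappa> C B \<omega> t)"

end

theory Submission
  imports Defs
begin

(*
  With gamma = -1 and C >= (1 + 2 (1 - kappa) / kappa) G every clipped vector already has
  norm at most C, so clipping is inactive and the filtered gradient is
  gtilde_t = grad F(x_t) + e_t, where the error obeys e_t = (1 - kappa) e_(t-1)
  + (centred minibatch noise) + kappa w_t.  For the Lyapunov function
    W_t = F(x_t) - F* + A |gtilde_(t-1) - grad F(x_(t-1))|^2 + 2 (eta/2 + A) L^2 |d_(t-1)|^2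
  the descent inequality for the L-smooth F gives, in expectation over one step,
    E W_(t+1) + eta/2 |grad F(x_t)|^2 <= W_t + 2 (eta/2 + A) kappa^2 d sigma_DP^2,
  provided (eta/2 + A) (1 - kappa)^2 <= A and eta is small; the batch size makes the
  sampling noise no larger than the privacy noise.  Telescoping over T + 1 steps with
  A = eta / (4 kappa) and inserting eta and kappa = M_kappa L eta gives the rate.
*)

section \<open>Gaussian noise and uniform minibatches\<close>

lemma prob_space_gauss_space: "\<sigma> > 0 \<Longrightarrow> prob_space (gauss_space \<sigma> :: ('n::finite \<Rightarrow> real) measure)"
  unfolding gauss_space_def by (intro prob_space_PiM prob_space_normal_density)

lemma prob_space_batch_space: "N \<ge> 1 \<Longrightarrow> prob_space (batch_space N B)"
  unfolding batch_space_def by (intro prob_space_PiM prob_space_measure_pmf)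

lemma prob_space_step_space:
  "\<sigma> > 0 \<Longrightarrow> N \<ge> 1 \<Longrightarrow> prob_space (step_space N B \<sigma> :: ((nat \<Rightarrow> nat) \<times> ('n::finite \<Rightarrow> real)) measure)"
  unfolding step_space_def by (intro prob_space_pair prob_space_gauss_space prob_space_batch_space)

lemma prob_space_omega_space:
  "\<sigma> > 0 \<Longrightarrow> N \<ge> 1 \<Longrightarrow> prob_space (omega_space N B \<sigma> :: (nat \<Rightarrow> (nat \<Rightarrow> nat) \<times> ('n::finite \<Rightarrow> real)) measure)"
  unfolding omega_space_def by (intro prob_space_PiM prob_space_step_space)

lemma integral_normal_affine_sq:
  assumes "\<sigma> > 0"
  shows "integrable (density lborel (normal_density 0 \<sigma>)) (\<lambda>x. (a + c * x)\<^sup>2)"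
    and "(\<integral>x. (a + c * x)\<^sup>2 \<partial>density lborel (normal_density 0 \<sigma>)) = a\<^sup>2 + c\<^sup>2 * \<sigma>\<^sup>2"
proof -
  have "has_bochner_integral lborel (\<lambda>x. normal_density 0 \<sigma> x * x ^ (2 * 0 + 1)) 0"
    using normal_moment_odd[OF assms, of 0 0] by simp
  moreover have "has_bochner_integral lborel (\<lambda>x. normal_density 0 \<sigma> x * x ^ (2 * 1)) (\<sigma>\<^sup>2)"
    using normal_moment_even[OF assms, of 0 1] assms by (simp add: fact_numeral)
  moreover have "has_bochner_integral lborel (normal_density 0 \<sigma>) 1"
    using assms by (simp add: has_bochner_integral_iff)
  ultimately have "has_bochner_integral lborel
      (\<lambda>x. a\<^sup>2 * normal_density 0 \<sigma> x + 2 * a * c * (normal_density 0 \<sigma> x * x ^ 1)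
         + c\<^sup>2 * (normal_density 0 \<sigma> x * x ^ 2)) (a\<^sup>2 * 1 + 2 * a * c * 0 + c\<^sup>2 * \<sigma>\<^sup>2)"
    by (intro has_bochner_integral_add has_bochner_integral_mult_right) simp_all
  then have "has_bochner_integral lborel (\<lambda>x. normal_density 0 \<sigma> x *\<^sub>R (a + c * x)\<^sup>2) (a\<^sup>2 + c\<^sup>2 * \<sigma>\<^sup>2)"
    by (rule has_bochner_integral_cong[THEN iffD1, rotated -1])
       (simp_all add: power2_eq_square algebra_simps)
  then show "integrable (density lborel (normal_density 0 \<sigma>)) (\<lambda>x. (a + c * x)\<^sup>2)"
    and "(\<integral>x. (a + c * x)\<^sup>2 \<partial>density lborel (normal_density 0 \<sigma>)) = a\<^sup>2 + c\<^sup>2 * \<sigma>\<^sup>2"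
    by (simp_all add: integrable_density integral_density has_bochner_integral_iff)
qed

lemma gauss_space_component:
  fixes h :: "real \<Rightarrow> real"
  assumes "\<sigma> > 0" "h \<in> borel_measurable borel"
  shows "integrable (gauss_space \<sigma> :: ('n::finite \<Rightarrow> real) measure) (\<lambda>w. h (w k))
           = integrable (density lborel (normal_density 0 \<sigma>)) h"
    and "(\<integral>w. h (w k) \<partial>(gauss_space \<sigma> :: ('n \<Rightarrow> real) measure))
           = (\<integral>x. h x \<partial>density lborel (normal_density 0 \<sigma>))"
proof -
  let ?G = "gauss_space \<sigma> :: ('n \<Rightarrow> real) measure"
  have distr: "distr ?G (density lborel (normal_density 0 \<sigma>)) (\<lambda>w. w k) = density lborel (normal_density 0 \<sigma>)"
    unfolding gauss_space_def using assms
    by (intro distr_PiM_component) (auto intro: prob_space_normal_density)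
  have meas: "(\<lambda>w. w k) \<in> measurable ?G (density lborel (normal_density 0 \<sigma>))"
    unfolding gauss_space_def by simp
  show "integrable ?G (\<lambda>w. h (w k)) = integrable (density lborel (normal_density 0 \<sigma>)) h"
    by (subst distr[symmetric], subst integrable_distr_eq[OF meas]) (use assms in auto)
  show "(\<integral>w. h (w k) \<partial>?G) = (\<integral>x. h x \<partial>density lborel (normal_density 0 \<sigma>))"
    by (subst distr[symmetric], subst integral_distr[OF meas]) (use assms in auto)
qed

lemma power2_norm_vec_eq_sum: "(norm (v :: real^'n::finite))\<^sup>2 = (\<Sum>k\<in>UNIV. (v $ k)\<^sup>2)"
  by (simp only: power2_norm_eq_inner inner_vec_def) (simp add: power2_eq_square)

lemma gauss_space_sq_norm:
  fixes a :: "real^'n::finite"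
  assumes "\<sigma> > 0"
  shows "integrable (gauss_space \<sigma>) (\<lambda>w. (norm (a + c *\<^sub>R vec_lambda w))\<^sup>2)"
    and "(\<integral>w. (norm (a + c *\<^sub>R vec_lambda w))\<^sup>2 \<partial>gauss_space \<sigma>) = (norm a)\<^sup>2 + c\<^sup>2 * real CARD('n) * \<sigma>\<^sup>2"
proof -
  have expand: "(norm (a + c *\<^sub>R vec_lambda w))\<^sup>2 = (\<Sum>k\<in>UNIV. (a $ k + c * w k)\<^sup>2)" for w
    by (simp add: power2_norm_vec_eq_sum)
  have meas: "(\<lambda>x. (a $ k + c * x)\<^sup>2) \<in> borel_measurable borel" for k
    by measurable
  have coord_integrable: "integrable (gauss_space \<sigma>) (\<lambda>w. (a $ k + c * w k)\<^sup>2)" for k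
    using gauss_space_component(1)[OF assms meas] integral_normal_affine_sq(1)[OF assms] by simp
  have coord_integral: "(\<integral>w. (a $ k + c * w k)\<^sup>2 \<partial>gauss_space \<sigma>) = (a $ k)\<^sup>2 + c\<^sup>2 * \<sigma>\<^sup>2" for k
    using gauss_space_component(2)[OF assms meas] integral_normal_affine_sq(2)[OF assms] by simp
  show "integrable (gauss_space \<sigma>) (\<lambda>w. (norm (a + c *\<^sub>R vec_lambda w))\<^sup>2)"
    unfolding expand using coord_integrable by (intro Bochner_Integration.integrable_sum) auto
  have "(\<integral>w. (norm (a + c *\<^sub>R vec_lambda w))\<^sup>2 \<partial>gauss_space \<sigma>)
      = (\<Sum>k\<in>UNIV. (a $ k)\<^sup>2 + c\<^sup>2 * \<sigma>\<^sup>2)"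
    unfolding expand using coord_integrable by (simp add: coord_integral)
  then show "(\<integral>w. (norm (a + c *\<^sub>R vec_lambda w))\<^sup>2 \<partial>gauss_space \<sigma>) = (norm a)\<^sup>2 + c\<^sup>2 * real CARD('n) * \<sigma>\<^sup>2"
    by (simp add: sum.distrib power2_norm_vec_eq_sum)
qed

lemma sum_sq_norm_add_centered:
  fixes u :: "nat \<Rightarrow> 'a::real_inner"
  assumes "(\<Sum>i<N. u i) = 0"
  shows "(\<Sum>i<N. (norm (c + s *\<^sub>R u i))\<^sup>2) = real N * (norm c)\<^sup>2 + s\<^sup>2 * (\<Sum>i<N. (norm (u i))\<^sup>2)"
proof -
  have "(\<Sum>i<N. (norm (c + s *\<^sub>R u i))\<^sup>2) = (\<Sum>i<N. (norm c)\<^sup>2 + 2 * s * inner c (u i) + s\<^sup>2 * (norm (u i))\<^sup>2)"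
    by (intro sum.cong refl, simp only: power2_norm_eq_inner)
       (simp add: inner_add_left inner_add_right inner_commute power2_eq_square algebra_simps)
  also have "\<dots> = real N * (norm c)\<^sup>2 + 2 * s * inner c (\<Sum>i<N. u i) + s\<^sup>2 * (\<Sum>i<N. (norm (u i))\<^sup>2)"
    by (simp add: sum.distrib inner_sum_right sum_distrib_left)
  finally show ?thesis using assms by simp
qed

lemma integrable_batch_sq_norm:
  fixes u :: "nat \<Rightarrow> 'a::euclidean_space" and J :: "nat set"
  assumes "finite J" and "\<And>i. norm (u i) \<le> U"
  shows "integrable (PiM J (\<lambda>_. measure_pmf (pmf_of_set {..<N}))) (\<lambda>b. (norm (a + s *\<^sub>R (\<Sum>j\<in>J. u (b j))))\<^sup>2)"
proof (rule finite_measure.integrable_const_bound)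
  show "finite_measure (PiM J (\<lambda>_. measure_pmf (pmf_of_set {..<N})))"
    by (intro prob_space.axioms(1) prob_space_PiM prob_space_measure_pmf)
  have sum_bound: "norm (\<Sum>j\<in>J. u (b j)) \<le> real (card J) * U" for b
    using norm_sum[of "\<lambda>j. u (b j)" J] sum_mono[of J "\<lambda>j. norm (u (b j))" "\<lambda>_. U"] assms(2) by simp
  have "norm (a + s *\<^sub>R (\<Sum>j\<in>J. u (b j))) \<le> norm a + \<bar>s\<bar> * (real (card J) * U)" for b
    using norm_triangle_ineq[of a "s *\<^sub>R (\<Sum>j\<in>J. u (b j))"] mult_left_mono[OF sum_bound[of b], of "\<bar>s\<bar>"]
    by simp
  then show "AE b in PiM J (\<lambda>_. measure_pmf (pmf_of_set {..<N})).
      norm ((norm (a + s *\<^sub>R (\<Sum>j\<in>J. u (b j))))\<^sup>2) \<le> (norm a + \<bar>s\<bar> * (real (card J) * U))\<^sup>2"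
    by (intro AE_I2) (simp add: power_mono)
  have "(\<lambda>b. u (b j)) \<in> borel_measurable (PiM J (\<lambda>_. measure_pmf (pmf_of_set {..<N})))" if "j \<in> J" for j
    by (rule measurable_compose[OF measurable_component_singleton[OF that]]) simp
  then show "(\<lambda>b. (norm (a + s *\<^sub>R (\<Sum>j\<in>J. u (b j))))\<^sup>2)
      \<in> borel_measurable (PiM J (\<lambda>_. measure_pmf (pmf_of_set {..<N})))"
    by measurable
qed

lemma integral_batch_sq_norm:
  fixes u :: "nat \<Rightarrow> 'a::euclidean_space" and J :: "nat set"
  assumes N: "N \<ge> 1" and J: "finite J" and centered: "(\<Sum>i<N. u i) = 0" and bounded: "\<And>i. norm (u i) \<le> U"
  shows "(\<integral>b. (norm (a + s *\<^sub>R (\<Sum>j\<in>J. u (b j))))\<^sup>2 \<partial>PiM J (\<lambda>_. measure_pmf (pmf_of_set {..<N})))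
         = (norm a)\<^sup>2 + s\<^sup>2 * real (card J) * ((\<Sum>i<N. (norm (u i))\<^sup>2) / real N)"
  using J
proof (induction J arbitrary: a rule: finite_induct)
  case empty
  then show ?case by (simp add: PiM_empty)
next
  case (insert j J)
  let ?M = "\<lambda>_::nat. measure_pmf (pmf_of_set {..<N})"
  let ?m2 = "(\<Sum>i<N. (norm (u i))\<^sup>2) / real N"
  interpret product_sigma_finite ?M
    by (auto simp: product_sigma_finite_def intro: prob_space_imp_sigma_finite prob_space_measure_pmf)
  have prob: "prob_space (PiM J ?M)" by (intro prob_space_PiM prob_space_measure_pmf)
  have split: "(\<Sum>i\<in>insert j J. u ((b(j := y)) i)) = u y + (\<Sum>i\<in>J. u (b i))" for b y
    using insert(1,2) by (auto intro!: sum.cong)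
  have inner: "(\<integral>y. (norm (c + s *\<^sub>R u y))\<^sup>2 \<partial>?M j) = (norm c)\<^sup>2 + s\<^sup>2 * ?m2" for c
    using N sum_sq_norm_add_centered[OF centered, of c s]
    by (subst integral_pmf_of_set) (auto simp: add_divide_distrib lessThan_empty_iff)
  have "(\<integral>b. (norm (a + s *\<^sub>R (\<Sum>i\<in>insert j J. u (b i))))\<^sup>2 \<partial>PiM (insert j J) ?M)
      = (\<integral>b. (\<integral>y. (norm (a + s *\<^sub>R (\<Sum>i\<in>insert j J. u ((b(j := y)) i))))\<^sup>2 \<partial>?M j) \<partial>PiM J ?M)"
    by (rule product_integral_insert[OF insert(1,2) integrable_batch_sq_norm[OF _ bounded]]) (use insert(1) in simp)
  also have "\<dots> = (\<integral>b. (norm (a + s *\<^sub>R (\<Sum>i\<in>J. u (b i))))\<^sup>2 + s\<^sup>2 * ?m2 \<partial>PiM J ?M)"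
  proof (rule Bochner_Integration.integral_cong[OF refl])
    fix b
    have "a + s *\<^sub>R (\<Sum>i\<in>insert j J. u ((b(j := y)) i)) = (a + s *\<^sub>R (\<Sum>i\<in>J. u (b i))) + s *\<^sub>R u y" for y
      unfolding split by (simp add: scaleR_add_right)
    then show "(\<integral>y. (norm (a + s *\<^sub>R (\<Sum>i\<in>insert j J. u ((b(j := y)) i))))\<^sup>2 \<partial>?M j)
        = (norm (a + s *\<^sub>R (\<Sum>i\<in>J. u (b i))))\<^sup>2 + s\<^sup>2 * ?m2"
      by (simp only: inner)
  qed
  also have "\<dots> = (norm a)\<^sup>2 + s\<^sup>2 * real (card J) * ?m2 + s\<^sup>2 * ?m2"
    using insert(3)[of a] integrable_batch_sq_norm[OF insert(1) bounded] prob_space.prob_space[OF prob]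
    by (subst Bochner_Integration.integral_add)
       (auto intro: finite_measure.integrable_const prob_space.axioms(1)[OF prob])
  also have "\<dots> = (norm a)\<^sup>2 + s\<^sup>2 * real (card (insert j J)) * ?m2"
    using insert(1,2) by (simp add: algebra_simps)
  finally show ?case .
qed

section \<open>Smooth finite sums\<close>

lemma Floss_has_derivative:
  assumes "\<And>i x. i < N \<Longrightarrow> GDERIV (f i) x :> gf i x"
  shows "(Floss N f has_derivative (\<lambda>h. inner h (gradF N gf x))) (at x)"
proof -
  have "((\<lambda>y. (1 / real N) * (\<Sum>i<N. f i y)) has_derivative (\<lambda>h. (1 / real N) * (\<Sum>i<N. inner h (gf i x)))) (at x)"
    using assms by (intro has_derivative_mult_right has_derivative_sum) (auto simp: gderiv_def)
  moreover have "(\<lambda>h. (1 / real N) * (\<Sum>i<N. inner h (gf i x))) = (\<lambda>h. inner h (gradF N gf x))"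
    by (simp add: gradF_def inner_sum_right)
  ultimately show ?thesis unfolding Floss_def by simp
qed

lemma norm_average_le:
  fixes v :: "nat \<Rightarrow> 'a::real_normed_vector"
  assumes "N \<ge> 1" and "\<And>i. i < N \<Longrightarrow> norm (v i) \<le> c"
  shows "norm ((1 / real N) *\<^sub>R (\<Sum>i<N. v i)) \<le> c"
proof -
  have "norm ((1 / real N) *\<^sub>R (\<Sum>i<N. v i)) \<le> (1 / real N) * (\<Sum>i<N. norm (v i))"
    using norm_sum[of v "{..<N}"] by (simp add: divide_right_mono)
  also have "\<dots> \<le> (1 / real N) * (\<Sum>i<N. c)"
    using assms(2) by (intro mult_left_mono sum_mono) auto
  finally show ?thesis using assms(1) by simp
qed

lemma gradF_norm_le:
  assumes "N \<ge> 1" and "\<And>i x. i < N \<Longrightarrow> norm (gf i x) \<le> G"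
  shows "norm (gradF N gf x) \<le> G"
  unfolding gradF_def using assms by (rule norm_average_le)

lemma gradF_lipschitz:
  assumes "N \<ge> 1" and "\<And>i x y. i < N \<Longrightarrow> norm (gf i x - gf i y) \<le> L * norm (x - y)"
  shows "norm (gradF N gf x - gradF N gf y) \<le> L * norm (x - y)"
proof -
  have "gradF N gf x - gradF N gf y = (1 / real N) *\<^sub>R (\<Sum>i<N. gf i x - gf i y)"
    by (simp add: gradF_def sum_subtractf scaleR_diff_right)
  then show ?thesis using assms by (simp only: norm_average_le)
qed

lemma lipschitz_family_const_nonneg:
  fixes gf :: "nat \<Rightarrow> real^'n::finite \<Rightarrow> real^'n"
  assumes "N \<ge> 1" and "\<And>i x y. i < N \<Longrightarrow> norm (gf i x - gf i y) \<le> L * norm (x - y)"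
  shows "L \<ge> 0"
proof -
  have "0 \<le> L * norm (1 - 0 :: real^'n)"
    using order_trans[OF norm_ge_zero assms(2)[of 0 1 0]] assms(1) by simp
  then show ?thesis by (simp add: zero_le_mult_iff)
qed

lemma lipschitz_gradient_upper_bound:
  fixes F :: "'a::real_inner \<Rightarrow> real"
  assumes deriv: "\<And>x. (F has_derivative (\<lambda>h. inner h (DF x))) (at x)"
    and lipschitz: "\<And>x y. norm (DF x - DF y) \<le> L * norm (x - y)" and "L \<ge> 0"
  shows "F y \<le> F x + inner (DF x) (y - x) + L * (norm (y - x))\<^sup>2"
proof -
  define h where "h = y - x"
  have "((\<lambda>s. F (x + s *\<^sub>R h)) has_derivative (\<lambda>t. t * inner h (DF (x + s *\<^sub>R h)))) (at s within {0..1})" for s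
  proof -
    have "((\<lambda>s. x + s *\<^sub>R h) has_derivative (\<lambda>t. t *\<^sub>R h)) (at s within {0..1})"
      by (auto intro!: derivative_eq_intros)
    from has_derivative_compose[OF this has_derivative_at_withinI[OF deriv]]
    show ?thesis by (simp add: inner_commute)
  qed
  then obtain s where s: "s \<in> {0<..<1}" and mvt: "F y - F x = inner h (DF (x + s *\<^sub>R h))"
    using mvt_simple[of 0 1 "\<lambda>s. F (x + s *\<^sub>R h)" "\<lambda>s t. t * inner h (DF (x + s *\<^sub>R h))"]
    by (auto simp: h_def)
  have "inner h (DF (x + s *\<^sub>R h) - DF x) \<le> norm h * norm (DF (x + s *\<^sub>R h) - DF x)"
    by (rule norm_cauchy_schwarz)
  also have "\<dots> \<le> norm h * (L * (s * norm h))"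
    using lipschitz[of "x + s *\<^sub>R h" x] s by (intro mult_left_mono) auto
  also have "\<dots> \<le> norm h * (L * norm h)"
    using s \<open>L \<ge> 0\<close> by (intro mult_left_mono) (auto simp: mult_left_le_one_le)
  finally have "inner h (DF (x + s *\<^sub>R h)) \<le> inner h (DF x) + L * (norm h)\<^sup>2"
    by (simp add: inner_diff_right power2_eq_square algebra_simps)
  then show ?thesis
    using mvt inner_commute[of "DF x" h] unfolding h_def by linarith
qed

lemma sum_sq_norm_diff_mean_le:
  fixes y :: "nat \<Rightarrow> 'a::real_inner"
  assumes "N \<ge> 1"
  shows "(\<Sum>i<N. (norm (y i - (1 / real N) *\<^sub>R (\<Sum>k<N. y k)))\<^sup>2) \<le> (\<Sum>i<N. (norm (y i))\<^sup>2)"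
proof -
  define m where "m = (1 / real N) *\<^sub>R (\<Sum>k<N. y k)"
  have sum_eq: "(\<Sum>k<N. y k) = real N *\<^sub>R m" using assms by (simp add: m_def)
  have "(\<Sum>i<N. (norm (y i - m))\<^sup>2) = (\<Sum>i<N. (norm (y i))\<^sup>2 - 2 * inner (y i) m + (norm m)\<^sup>2)"
    by (intro sum.cong refl, simp only: power2_norm_eq_inner)
       (simp add: inner_diff_left inner_diff_right inner_commute)
  also have "\<dots> = (\<Sum>i<N. (norm (y i))\<^sup>2) - 2 * inner (\<Sum>k<N. y k) m + real N * (norm m)\<^sup>2"
    by (simp add: sum.distrib sum_subtractf inner_sum_left sum_distrib_left)
  also have "\<dots> = (\<Sum>i<N. (norm (y i))\<^sup>2) - real N * (norm m)\<^sup>2"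
    unfolding sum_eq by (simp add: power2_norm_eq_inner)
  finally show ?thesis unfolding m_def by simp
qed

lemma power2_norm_add_le: "(norm (a + b :: 'a::real_normed_vector))\<^sup>2 \<le> 2 * (norm a)\<^sup>2 + 2 * (norm b)\<^sup>2"
proof -
  have "(norm (a + b))\<^sup>2 \<le> (norm a + norm b)\<^sup>2" by (simp add: norm_triangle_ineq power_mono)
  also have "\<dots> \<le> 2 * (norm a)\<^sup>2 + 2 * (norm b)\<^sup>2"
    using zero_le_power2[of "norm a - norm b"] by (simp only: power2_diff power2_sum)
  finally show ?thesis .
qed

section \<open>The DiSK iteration\<close>

definition disk_step :: "(nat \<Rightarrow> real^'n \<Rightarrow> real^'n) \<Rightarrow> real \<Rightarrow> real \<Rightarrow> real \<Rightarrow> real \<Rightarrow> nat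
     \<Rightarrow> (real^'n) \<times> (real^'n) \<times> (real^'n) \<Rightarrow> (nat \<Rightarrow> nat) \<times> ('n::finite \<Rightarrow> real)
     \<Rightarrow> (real^'n) \<times> (real^'n) \<times> (real^'n)" where
  "disk_step gf \<eta> \<gamma> \<kappa> C B s z =
     (let (x, gt, dd) = s;
          bat = fst z; w = snd z;
          a = (1 - \<kappa>) / (\<kappa> * \<gamma>);
          g = (1 / real B) *\<^sub>R (\<Sum>j<B. clip (a *\<^sub>R gf (bat j) (x + \<gamma> *\<^sub>R dd) + (1 - a) *\<^sub>R gf (bat j) x) C)
              + (\<chi> k. w k);
          gt' = (1 - \<kappa>) *\<^sub>R gt + \<kappa> *\<^sub>R g;
          x' = x - \<eta> *\<^sub>R gt'
      in (x', gt', x' - x))"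

(* disk_state started from an arbitrary state (x_t, gtilde_(t-1), d_(t-1)); restarting the
   process after its first step needs this. *)
fun disk_run :: "(nat \<Rightarrow> real^'n \<Rightarrow> real^'n) \<Rightarrow> real \<Rightarrow> real \<Rightarrow> real \<Rightarrow> real \<Rightarrow> nat
     \<Rightarrow> (real^'n) \<times> (real^'n) \<times> (real^'n) \<Rightarrow> (nat \<Rightarrow> (nat \<Rightarrow> nat) \<times> ('n::finite \<Rightarrow> real)) \<Rightarrow> nat
     \<Rightarrow> (real^'n) \<times> (real^'n) \<times> (real^'n)" where
  "disk_run gf \<eta> \<gamma> \<kappa> C B s \<omega> 0 = s"
| "disk_run gf \<eta> \<gamma> \<kappa> C B s \<omega> (Suc t) = disk_step gf \<eta> \<gamma> \<kappa> C B (disk_run gf \<eta> \<gamma> \<kappa> C B s \<omega> t) (\<omega> t)"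

lemma disk_state_eq_disk_run: "disk_state gf x0 \<eta> \<gamma> \<kappa> C B \<omega> t = disk_run gf \<eta> \<gamma> \<kappa> C B (x0, 0, 0) \<omega> t"
  by (induction t) (simp_all add: disk_step_def)

lemma disk_run_case_nat:
  "disk_run gf \<eta> \<gamma> \<kappa> C B s (case_nat z \<omega>) (Suc t) = disk_run gf \<eta> \<gamma> \<kappa> C B (disk_step gf \<eta> \<gamma> \<kappa> C B s z) \<omega> t"
  by (induction t) simp_all

lemma measurable_batch_index:
  assumes "Z \<in> measurable M (step_space N B \<sigma>)" and "j < B"
  shows "(\<lambda>\<omega>. fst (Z \<omega>) j) \<in> measurable M (count_space UNIV)"
proof -
  have "(\<lambda>\<omega>. fst (Z \<omega>)) \<in> measurable M (batch_space N B)"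
    using assms(1) unfolding step_space_def by measurable
  then have "(\<lambda>\<omega>. fst (Z \<omega>) j) \<in> measurable M (measure_pmf (pmf_of_set {..<N}))"
    unfolding batch_space_def
    by (rule measurable_compose[OF _ measurable_component_singleton]) (use assms(2) in auto)
  then show ?thesis by simp
qed

lemma measurable_gauss_noise:
  assumes "Z \<in> measurable M (step_space N B \<sigma>)"
  shows "(\<lambda>\<omega>. vec_lambda (snd (Z \<omega>)) :: real^'n::finite) \<in> borel_measurable M"
proof -
  have "(\<lambda>\<omega>. snd (Z \<omega>)) \<in> measurable M (gauss_space \<sigma> :: ('n \<Rightarrow> real) measure)"
    using assms unfolding step_space_def by (rule measurable_compose[OF _ measurable_snd])
  moreover have "(\<lambda>w. w k) \<in> borel_measurable (gauss_space \<sigma> :: ('n \<Rightarrow> real) measure)" for k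
    unfolding gauss_space_def by measurable
  ultimately have "(\<lambda>\<omega>. snd (Z \<omega>) k) \<in> borel_measurable M" for k
    by (rule measurable_compose)
  then show ?thesis
    by (subst borel_measurable_euclidean_space) (auto simp: Basis_vec_def inner_axis)
qed

lemma borel_measurable_clip[measurable]: "(\<lambda>v. clip v C) \<in> borel_measurable borel"
  unfolding clip_def by measurable

lemma measurable_disk_step:
  fixes gf :: "nat \<Rightarrow> real^'n::finite \<Rightarrow> real^'n"
  assumes gf: "\<And>i. gf i \<in> borel_measurable borel"
    and s: "s \<in> borel_measurable M" and Z: "Z \<in> measurable M (step_space N B \<sigma>)"
  shows "(\<lambda>\<omega>. disk_step gf \<eta> \<gamma> \<kappa> C B (s \<omega>) (Z \<omega>)) \<in> borel_measurable M"
proof -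
  define a where "a = (1 - \<kappa>) / (\<kappa> * \<gamma>)"
  have x: "(\<lambda>\<omega>. fst (s \<omega>)) \<in> borel_measurable M" and gt: "(\<lambda>\<omega>. fst (snd (s \<omega>))) \<in> borel_measurable M"
    and dd: "(\<lambda>\<omega>. snd (snd (s \<omega>))) \<in> borel_measurable M"
    using s unfolding borel_prod[symmetric] by measurable
  have grad_at: "(\<lambda>\<omega>. gf (fst (Z \<omega>) j) (y \<omega>)) \<in> borel_measurable M"
    if "y \<in> borel_measurable M" "j < B" for y j
    by (rule measurable_compose_countable[OF _ measurable_batch_index[OF Z that(2)]])
       (rule measurable_compose[OF that(1) gf])
  have "(\<lambda>\<omega>. clip (a *\<^sub>R gf (fst (Z \<omega>) j) (fst (s \<omega>) + \<gamma> *\<^sub>R snd (snd (s \<omega>)))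
                    + (1 - a) *\<^sub>R gf (fst (Z \<omega>) j) (fst (s \<omega>))) C) \<in> borel_measurable M" if "j < B" for j
    using grad_at[OF _ that, of "\<lambda>\<omega>. fst (s \<omega>) + \<gamma> *\<^sub>R snd (snd (s \<omega>))"] grad_at[OF x that] x dd
    by measurable
  then have "(\<lambda>\<omega>. \<Sum>j<B. clip (a *\<^sub>R gf (fst (Z \<omega>) j) (fst (s \<omega>) + \<gamma> *\<^sub>R snd (snd (s \<omega>)))
                    + (1 - a) *\<^sub>R gf (fst (Z \<omega>) j) (fst (s \<omega>))) C) \<in> borel_measurable M"
    by (intro borel_measurable_sum) auto
  then show ?thesis
    using x gt measurable_gauss_noise[OF Z]
    unfolding disk_step_def Let_def a_def[symmetric] by (simp add: split_beta) measurable
qed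

lemma measurable_disk_run:
  assumes "\<And>i. gf i \<in> borel_measurable borel"
  shows "(\<lambda>\<omega>. disk_run gf \<eta> \<gamma> \<kappa> C B s \<omega> t) \<in> borel_measurable (omega_space N B \<sigma>)"
proof (induction t)
  case (Suc t)
  have "(\<lambda>\<omega>. \<omega> t) \<in> measurable (omega_space N B \<sigma>) (step_space N B \<sigma>)"
    unfolding omega_space_def by simp
  then show ?case using measurable_disk_step[OF assms Suc] by simp
qed simp

lemma measurable_batch_sum:
  fixes u :: "nat \<Rightarrow> 'a::euclidean_space"
  shows "(\<lambda>z. \<Sum>j<B. u (fst z j)) \<in> borel_measurable (step_space N B \<sigma> :: (_ \<times> ('n::finite \<Rightarrow> real)) measure)"
proof -
  have "(\<lambda>z. u (fst z j)) \<in> borel_measurable (step_space N B \<sigma> :: (_ \<times> ('n \<Rightarrow> real)) measure)" if "j < B" for j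
    by (rule measurable_compose_countable[OF _ measurable_batch_index[OF measurable_ident_sets[OF refl] that]]) simp
  then show ?thesis by (intro borel_measurable_sum) auto
qed

lemma step_space_sq_norm:
  fixes u :: "nat \<Rightarrow> real^'n::finite" and a :: "real^'n" and s c :: real and B :: nat
  assumes N: "N \<ge> 1" and \<sigma>: "\<sigma> > 0"
    and centered: "(\<Sum>i<N. u i) = 0" and bounded: "\<And>i. norm (u i) \<le> U"
  defines "Q \<equiv> \<lambda>z. (norm (a + s *\<^sub>R (\<Sum>j<B. u (fst z j)) + c *\<^sub>R vec_lambda (snd z)))\<^sup>2"
    and "V \<equiv> (norm a)\<^sup>2 + s\<^sup>2 * real B * ((\<Sum>i<N. (norm (u i))\<^sup>2) / real N) + c\<^sup>2 * real CARD('n) * \<sigma>\<^sup>2"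
  shows "integrable (step_space N B \<sigma>) Q" and "integral\<^sup>L (step_space N B \<sigma>) Q = V"
proof -
  let ?G = "gauss_space \<sigma> :: ('n \<Rightarrow> real) measure"
  let ?m2 = "(\<Sum>i<N. (norm (u i))\<^sup>2) / real N"
  have gauss: "prob_space ?G" and batch: "prob_space (batch_space N B)"
    using prob_space_gauss_space[OF \<sigma>] prob_space_batch_space[OF N] .
  have Q_meas: "Q \<in> borel_measurable (step_space N B \<sigma>)"
    unfolding Q_def
    using measurable_batch_sum[where u=u and N=N and B=B and \<sigma>=\<sigma> and 'n='n]
      measurable_gauss_noise[OF measurable_ident_sets[OF refl]]
    by measurable
  have inner: "(\<integral>\<^sup>+w. ennreal (Q (b, w)) \<partial>?G) = ennreal ((norm (a + s *\<^sub>R (\<Sum>j<B. u (b j))))\<^sup>2 + c\<^sup>2 * real CARD('n) * \<sigma>\<^sup>2)" for b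
    unfolding Q_def using gauss_space_sq_norm[OF \<sigma>, of "a + s *\<^sub>R (\<Sum>j<B. u (b j))" c]
    by (subst nn_integral_eq_integral) auto
  have batch_int: "integrable (batch_space N B) (\<lambda>b. (norm (a + s *\<^sub>R (\<Sum>j<B. u (b j))))\<^sup>2)"
    unfolding batch_space_def by (rule integrable_batch_sq_norm[OF finite_lessThan bounded])
  have batch_integral: "(\<integral>b. (norm (a + s *\<^sub>R (\<Sum>j<B. u (b j))))\<^sup>2 \<partial>batch_space N B)
      = (norm a)\<^sup>2 + s\<^sup>2 * real B * ?m2"
    unfolding batch_space_def using integral_batch_sq_norm[OF N finite_lessThan centered bounded] by simp
  have outer: "(\<integral>b. (norm (a + s *\<^sub>R (\<Sum>j<B. u (b j))))\<^sup>2 + c\<^sup>2 * real CARD('n) * \<sigma>\<^sup>2 \<partial>batch_space N B) = V"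
    using batch_int finite_measure.integrable_const[OF prob_space.axioms(1)[OF batch]]
    by (subst Bochner_Integration.integral_add) (auto simp: batch_integral V_def prob_space.prob_space[OF batch])
  have "(\<integral>\<^sup>+z. ennreal (Q z) \<partial>step_space N B \<sigma>) = (\<integral>\<^sup>+b. (\<integral>\<^sup>+w. ennreal (Q (b, w)) \<partial>?G) \<partial>batch_space N B)"
    using sigma_finite_measure.nn_integral_fst[OF prob_space_imp_sigma_finite[OF gauss], of "\<lambda>z. ennreal (Q z)" "batch_space N B"] Q_meas
    by (simp add: step_space_def)
  also have "\<dots> = ennreal V"
    unfolding inner using outer batch_int prob_space.axioms(1)[OF batch]
    by (subst nn_integral_eq_integral) (auto intro: finite_measure.integrable_const)
  finally have nn: "(\<integral>\<^sup>+z. ennreal (Q z) \<partial>step_space N B \<sigma>) = ennreal V" .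
  have V_nonneg: "V \<ge> 0" unfolding V_def by (auto intro!: add_nonneg_nonneg mult_nonneg_nonneg divide_nonneg_nonneg sum_nonneg)
  show "integrable (step_space N B \<sigma>) Q"
    using nn Q_meas by (intro integrableI_nonneg) (auto simp: Q_def)
  then show "integral\<^sup>L (step_space N B \<sigma>) Q = V"
    using nn V_nonneg by (subst integral_eq_nn_integral) (auto simp: Q_def)
qed

lemma nn_integral_sequence_space_case_nat:
  fixes S :: "'a measure" and H :: "(nat \<Rightarrow> 'a) \<Rightarrow> ennreal"
  assumes S: "prob_space S" and H: "H \<in> borel_measurable (PiM UNIV (\<lambda>_::nat. S))"
  shows "(\<integral>\<^sup>+\<omega>. H \<omega> \<partial>PiM UNIV (\<lambda>_. S)) = (\<integral>\<^sup>+z. (\<integral>\<^sup>+\<omega>. H (case_nat z \<omega>) \<partial>PiM UNIV (\<lambda>_. S)) \<partial>S)"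
proof -
  interpret sequence_space S
    unfolding sequence_space_def product_prob_space_def product_prob_space_axioms_def product_sigma_finite_def
    using S by (auto intro: prob_space_imp_sigma_finite)
  have seq: "prob_space (PiM UNIV (\<lambda>_::nat. S))" by (rule prob_space_PiM) (use S in auto)
  interpret pair_sigma_finite S "PiM UNIV (\<lambda>_::nat. S)"
    unfolding pair_sigma_finite_def using S seq by (auto intro: prob_space_imp_sigma_finite)
  have shift: "(\<lambda>(s, \<omega>). case_nat s \<omega>) \<in> measurable (S \<Otimes>\<^sub>M PiM UNIV (\<lambda>_. S)) (PiM UNIV (\<lambda>_. S))"
    by measurable
  have "(\<integral>\<^sup>+\<omega>. H \<omega> \<partial>PiM UNIV (\<lambda>_. S))
      = (\<integral>\<^sup>+\<omega>. H \<omega> \<partial>distr (S \<Otimes>\<^sub>M PiM UNIV (\<lambda>_. S)) (PiM UNIV (\<lambda>_. S)) (\<lambda>(s, \<omega>). case_nat s \<omega>))"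
    by (simp add: PiM_iter)
  also have "\<dots> = (\<integral>\<^sup>+p. H (case_prod case_nat p) \<partial>(S \<Otimes>\<^sub>M PiM UNIV (\<lambda>_. S)))"
    by (rule nn_integral_distr[OF shift]) (simp add: H)
  also have "\<dots> = (\<integral>\<^sup>+z. (\<integral>\<^sup>+\<omega>. H (case_nat z \<omega>) \<partial>PiM UNIV (\<lambda>_. S)) \<partial>S)"
    using sigma_finite_measure.nn_integral_fst[OF prob_space_imp_sigma_finite[OF seq] measurable_compose[OF shift H]]
    by simp
  finally show ?thesis .
qed

(* The minibatch space also contains, on a null set, indices >= N, where nothing is assumed
   about the per-sample gradients; padding with zero makes the bounds hold everywhere. *)
definition pad_grads :: "nat \<Rightarrow> (nat \<Rightarrow> 'a \<Rightarrow> 'b::zero) \<Rightarrow> nat \<Rightarrow> 'a \<Rightarrow> 'b" where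
  "pad_grads N gf i x = (if i < N then gf i x else 0)"

lemma disk_step_pad_grads:
  assumes "\<forall>j<B. fst z j < N"
  shows "disk_step gf \<eta> \<gamma> \<kappa> C B s z = disk_step (pad_grads N gf) \<eta> \<gamma> \<kappa> C B s z"
proof -
  have "(\<Sum>j<B. clip (a *\<^sub>R gf (fst z j) y1 + (1 - a) *\<^sub>R gf (fst z j) y2) C)
      = (\<Sum>j<B. clip (a *\<^sub>R pad_grads N gf (fst z j) y1 + (1 - a) *\<^sub>R pad_grads N gf (fst z j) y2) C)"
    for a y1 y2
    using assms by (intro sum.cong refl) (simp add: pad_grads_def)
  then show ?thesis unfolding disk_step_def Let_def by (simp add: split_beta)
qed

lemma disk_run_pad_grads:
  assumes "\<forall>t. \<forall>j<B. fst (\<omega> t) j < N"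
  shows "disk_run gf \<eta> \<gamma> \<kappa> C B s \<omega> t = disk_run (pad_grads N gf) \<eta> \<gamma> \<kappa> C B s \<omega> t"
proof (induction t)
  case (Suc t)
  show ?case using Suc disk_step_pad_grads[of B "\<omega> t" N gf] assms by simp
qed simp

lemma AE_batch_indices_in_range:
  assumes "N \<ge> 1" and "\<sigma> > 0"
  shows "AE \<omega> in (omega_space N B \<sigma> :: (nat \<Rightarrow> (nat \<Rightarrow> nat) \<times> ('n::finite \<Rightarrow> real)) measure).
           \<forall>t. \<forall>j<B. fst (\<omega> t) j < N"
proof -
  have "AE b in batch_space N B. b j < N" if "j < B" for j
    unfolding batch_space_def using that assms(1)
    by (intro AE_PiM_component prob_space_measure_pmf) (auto simp: AE_measure_pmf_iff lessThan_empty_iff)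
  then have batch: "AE b in batch_space N B. \<forall>j<B. b j < N"
    by (subst AE_all_countable) auto
  let ?S = "step_space N B \<sigma> :: ((nat \<Rightarrow> nat) \<times> ('n \<Rightarrow> real)) measure"
  have distr_fst: "distr ?S (batch_space N B) fst = batch_space N B"
    unfolding step_space_def by (rule prob_space.distr_pair_fst[OF prob_space_gauss_space[OF assms(2)]])
  have "fst \<in> measurable ?S (batch_space N B)" by (simp add: step_space_def)
  from AE_distrD[OF this, where P="\<lambda>b. \<forall>j<B. b j < N"]
  have "AE z in ?S. \<forall>j<B. fst z j < N" using batch by (simp only: distr_fst)
  then have "AE \<omega> in (omega_space N B \<sigma> :: (nat \<Rightarrow> (nat \<Rightarrow> nat) \<times> ('n \<Rightarrow> real)) measure).
      \<forall>j<B. fst (\<omega> t) j < N" for t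
    unfolding omega_space_def using prob_space_step_space[OF assms(2,1)]
    by (intro AE_PiM_component[where P="\<lambda>z. \<forall>j<B. fst z j < N"]) auto
  then show ?thesis by (subst AE_all_countable) auto
qed

(* f need not be measurable: a non-integrable f has integral 0. *)
lemma integral_le_if_AE_eq:
  fixes f g :: "'a \<Rightarrow> real"
  assumes "AE x in M. f x = g x" and "g \<in> borel_measurable M" and "0 \<le> integral\<^sup>L M g"
  shows "integral\<^sup>L M f \<le> integral\<^sup>L M g"
proof (cases "integrable M f")
  case True
  then have "integral\<^sup>L M f = integral\<^sup>L M g"
    using assms(1,2) by (intro integral_cong_AE) auto
  then show ?thesis by simp
next
  case False
  then show ?thesis using assms(3) by (simp add: not_integrable_integral_eq)
qed

section \<open>Lyapunov analysis\<close>

lemma clip_eq_self: "norm v \<le> C \<Longrightarrow> clip v C = v"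
  by (cases "v = 0") (auto simp: clip_def min_def field_simps)

locale disk_sgd_analysis =
  fixes N B :: nat and f :: "nat \<Rightarrow> real^'n::finite \<Rightarrow> real" and gf :: "nat \<Rightarrow> real^'n \<Rightarrow> real^'n"
    and L G \<sigma>SGD \<sigma> C \<eta> \<kappa> Fs A :: real
  assumes N_pos: "N \<ge> 1" and B_pos: "B \<ge> 1" and \<sigma>_pos: "\<sigma> > 0"
    and \<kappa>_pos: "0 < \<kappa>" and \<kappa>_le_1: "\<kappa> \<le> 1" and \<eta>_pos: "\<eta> > 0"
    and grad: "\<And>i x. i < N \<Longrightarrow> GDERIV (f i) x :> gf i x"
    and lipschitz: "\<And>i x y. i < N \<Longrightarrow> norm (gf i x - gf i y) \<le> L * norm (x - y)"
    and variance: "\<And>x. (1 / real N) * (\<Sum>i<N. (norm (gf i x - gradF N gf x))\<^sup>2) \<le> \<sigma>SGD\<^sup>2"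
    and bounded: "\<And>i x. i < N \<Longrightarrow> norm (gf i x) \<le> G"
    and Fs_le: "\<And>x. Fs \<le> Floss N f x"
    and C_ge: "C \<ge> (1 + 2 * (1 - \<kappa>) / \<kappa>) * G"
    and batch_large: "2 * \<sigma>SGD\<^sup>2 \<le> real B * (real CARD('n) * \<sigma>\<^sup>2)"
    and A_nonneg: "A \<ge> 0"
    and A_contraction: "(\<eta> / 2 + A) * (1 - \<kappa>)\<^sup>2 \<le> A"
    and \<eta>_small: "2 * (\<eta> / 2 + A) * L\<^sup>2 * \<eta>\<^sup>2 \<le> \<eta> / 2 - L * \<eta>\<^sup>2"
begin

abbreviation "F \<equiv> Floss N f"
abbreviation "DF \<equiv> gradF N gf"
abbreviation "pgf \<equiv> pad_grads N gf"

lemma L_nonneg: "L \<ge> 0"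
  using lipschitz_family_const_nonneg[OF N_pos lipschitz] .

lemma G_nonneg: "G \<ge> 0"
  using bounded[of 0 0] N_pos norm_ge_zero[of "gf 0 0"] by linarith

lemma norm_pgf_le: "norm (pgf i x) \<le> G"
  using bounded G_nonneg by (simp add: pad_grads_def)

lemma norm_DF_le: "norm (DF x) \<le> G"
  using gradF_norm_le[OF N_pos bounded] .

lemma F_has_derivative: "(F has_derivative (\<lambda>h. inner h (DF x))) (at x)"
  by (rule Floss_has_derivative) (rule grad)

lemma F_descent: "F y \<le> F x + inner (DF x) (y - x) + L * (norm (y - x))\<^sup>2"
  using lipschitz_gradient_upper_bound[OF F_has_derivative gradF_lipschitz[OF N_pos lipschitz] L_nonneg] .

(* The state (x, gt, dd) is (x_t, gtilde_(t-1), d_(t-1)), so x - dd is the previous iterate. *)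
definition lyapunov :: "(real^'n) \<times> (real^'n) \<times> (real^'n) \<Rightarrow> real" where
  "lyapunov s = (case s of (x, gt, dd) \<Rightarrow>
     F x - Fs + A * (norm (gt - DF (x - dd)))\<^sup>2 + 2 * (\<eta> / 2 + A) * L\<^sup>2 * (norm dd)\<^sup>2)"

lemma lyapunov_nonneg: "lyapunov s \<ge> 0"
  using Fs_le A_nonneg \<eta>_pos by (auto simp: lyapunov_def split: prod.split)

(* Deviation from its dataset mean of gf i x - (1 - kappa) gf i (x - dd), which is kappa times
   the argument of clip in disk_step when gamma = -1. *)
definition sample_noise :: "real^'n \<Rightarrow> real^'n \<Rightarrow> nat \<Rightarrow> real^'n" where
  "sample_noise x dd i = (pgf i x - DF x) - (1 - \<kappa>) *\<^sub>R (pgf i (x - dd) - DF (x - dd))"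

definition step_error :: "(real^'n) \<times> (real^'n) \<times> (real^'n) \<Rightarrow> (nat \<Rightarrow> nat) \<times> ('n \<Rightarrow> real) \<Rightarrow> real^'n" where
  "step_error s z = (case s of (x, gt, dd) \<Rightarrow>
     (1 - \<kappa>) *\<^sub>R (gt - DF (x - dd)) + (1 / real B) *\<^sub>R (\<Sum>j<B. sample_noise x dd (fst z j))
       + \<kappa> *\<^sub>R vec_lambda (snd z))"

lemma norm_clip_argument_le:
  defines "a \<equiv> (1 - \<kappa>) / (\<kappa> * (-1))"
  shows "norm (a *\<^sub>R pgf i y + (1 - a) *\<^sub>R pgf i x) \<le> C"
proof -
  have "norm (a *\<^sub>R pgf i y + (1 - a) *\<^sub>R pgf i x) \<le> \<bar>a\<bar> * G + \<bar>1 - a\<bar> * G"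
    by (rule order_trans[OF norm_triangle_ineq]) (auto intro!: add_mono mult_left_mono norm_pgf_le)
  also have "\<dots> = (1 + 2 * (1 - \<kappa>) / \<kappa>) * G"
    using \<kappa>_pos \<kappa>_le_1 by (simp add: a_def abs_if field_simps)
  finally show ?thesis using C_ge by simp
qed

lemma disk_step_eq:
  "disk_step pgf \<eta> (-1) \<kappa> C B s z =
     (fst s - \<eta> *\<^sub>R (DF (fst s) + step_error s z), DF (fst s) + step_error s z,
      - (\<eta> *\<^sub>R (DF (fst s) + step_error s z)))"
proof -
  obtain x gt dd where s: "s = (x, gt, dd)" by (cases s) auto
  define a where "a = (1 - \<kappa>) / (\<kappa> * (-1))"
  define v where "v j = a *\<^sub>R pgf (fst z j) (x + (-1) *\<^sub>R dd) + (1 - a) *\<^sub>R pgf (fst z j) x" for j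
  have \<kappa>a: "\<kappa> * a = - (1 - \<kappa>)" "\<kappa> * (1 - a) = 1" using \<kappa>_pos by (simp_all add: a_def field_simps)
  have \<kappa>v: "\<kappa> *\<^sub>R v j = sample_noise x dd (fst z j) + (DF x - (1 - \<kappa>) *\<^sub>R DF (x - dd))" for j
    unfolding v_def sample_noise_def scaleR_add_right scaleR_scaleR \<kappa>a by (simp add: algebra_simps)
  have "\<kappa> *\<^sub>R ((1 / real B) *\<^sub>R (\<Sum>j<B. v j)) = (1 / real B) *\<^sub>R (\<Sum>j<B. \<kappa> *\<^sub>R v j)"
    by (simp add: scaleR_sum_right)
  also have "\<dots> = (1 / real B) *\<^sub>R ((\<Sum>j<B. sample_noise x dd (fst z j)) + real B *\<^sub>R (DF x - (1 - \<kappa>) *\<^sub>R DF (x - dd)))"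
    by (simp add: \<kappa>v sum.distrib sum_constant_scaleR del: sum_constant)
  also have "\<dots> = (1 / real B) *\<^sub>R (\<Sum>j<B. sample_noise x dd (fst z j)) + (DF x - (1 - \<kappa>) *\<^sub>R DF (x - dd))"
    using B_pos by (simp add: scaleR_add_right)
  finally have "\<kappa> *\<^sub>R ((1 / real B) *\<^sub>R (\<Sum>j<B. v j))
      = (1 / real B) *\<^sub>R (\<Sum>j<B. sample_noise x dd (fst z j)) + (DF x - (1 - \<kappa>) *\<^sub>R DF (x - dd))" .
  then have filtered: "(1 - \<kappa>) *\<^sub>R gt + \<kappa> *\<^sub>R ((1 / real B) *\<^sub>R (\<Sum>j<B. v j) + (\<chi> k. snd z k))
      = DF x + step_error s z"
    unfolding scaleR_add_right step_error_def s by (simp add: algebra_simps)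
  have unclipped: "(\<Sum>j<B. clip (v j) C) = (\<Sum>j<B. v j)"
    unfolding v_def a_def by (intro sum.cong refl clip_eq_self norm_clip_argument_le)
  show ?thesis
    unfolding disk_step_def Let_def s prod.case a_def[symmetric] v_def[symmetric]
    by (simp only: unclipped filtered) (simp add: s)
qed

lemma lyapunov_disk_step_le:
  "lyapunov (disk_step pgf \<eta> (-1) \<kappa> C B s z)
     \<le> F (fst s) - Fs - \<eta> / 2 * (norm (DF (fst s)))\<^sup>2 + (\<eta> / 2 + A) * (norm (step_error s z))\<^sup>2"
proof -
  define x e where "x = fst s" and "e = step_error s z"
  define v where "v = DF x + e"
  have W: "lyapunov (disk_step pgf \<eta> (-1) \<kappa> C B s z)
      = F (x - \<eta> *\<^sub>R v) - Fs + A * (norm e)\<^sup>2 + 2 * (\<eta> / 2 + A) * L\<^sup>2 * \<eta>\<^sup>2 * (norm v)\<^sup>2"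
    unfolding disk_step_eq lyapunov_def x_def[symmetric] e_def[symmetric] v_def[symmetric]
    by (simp add: v_def power_mult_distrib)
  have "F (x - \<eta> *\<^sub>R v) \<le> F x - \<eta> * inner (DF x) v + L * \<eta>\<^sup>2 * (norm v)\<^sup>2"
    using F_descent[of "x - \<eta> *\<^sub>R v" x] by (simp add: power_mult_distrib)
  moreover have "inner (DF x) v = ((norm (DF x))\<^sup>2 + (norm v)\<^sup>2 - (norm e)\<^sup>2) / 2"
    unfolding v_def by (simp add: power2_norm_eq_inner inner_add_left inner_add_right inner_commute)
  moreover have "(2 * (\<eta> / 2 + A) * L\<^sup>2 * \<eta>\<^sup>2 + L * \<eta>\<^sup>2) * (norm v)\<^sup>2 \<le> \<eta> / 2 * (norm v)\<^sup>2"
    using \<eta>_small by (intro mult_right_mono) auto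
  ultimately show ?thesis
    unfolding W x_def[symmetric] e_def[symmetric] by (simp add: field_simps)
qed

lemma sum_sample_noise: "(\<Sum>i<N. sample_noise x dd i) = 0"
proof -
  have sum_gf: "(\<Sum>i<N. pgf i y) = real N *\<^sub>R DF y" for y
    using N_pos by (simp add: gradF_def pad_grads_def)
  show ?thesis
    by (simp add: sample_noise_def sum_subtractf scaleR_sum_right[symmetric] sum_gf
        sum_constant_scaleR del: sum_constant)
qed

lemma norm_sample_noise_le: "norm (sample_noise x dd i) \<le> 4 * G"
proof -
  have deviation: "norm (pgf i y - DF y) \<le> 2 * G" for y
    using norm_triangle_ineq4[of "pgf i y" "DF y"] norm_pgf_le[of i y] norm_DF_le[of y] by simp
  have "norm ((1 - \<kappa>) *\<^sub>R (pgf i (x - dd) - DF (x - dd))) \<le> norm (pgf i (x - dd) - DF (x - dd))"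
    using \<kappa>_pos \<kappa>_le_1 by (simp add: mult_left_le_one_le)
  then show ?thesis
    unfolding sample_noise_def
    using norm_triangle_ineq4[of "pgf i x - DF x" "(1 - \<kappa>) *\<^sub>R (pgf i (x - dd) - DF (x - dd))"]
      deviation[of x] deviation[of "x - dd"]
    by linarith
qed

lemma mean_sq_sample_noise_le:
  "(\<Sum>i<N. (norm (sample_noise x dd i))\<^sup>2) / real N
     \<le> 2 * \<kappa>\<^sup>2 * \<sigma>SGD\<^sup>2 + 2 * (1 - \<kappa>)\<^sup>2 * L\<^sup>2 * (norm dd)\<^sup>2"
proof -
  define y where "y i = gf i x - gf i (x - dd)" for i
  define ybar where "ybar = (1 / real N) *\<^sub>R (\<Sum>k<N. y k)"
  have ybar_eq: "ybar = DF x - DF (x - dd)"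
    by (simp add: ybar_def y_def gradF_def sum_subtractf scaleR_diff_right)
  have split: "sample_noise x dd i = \<kappa> *\<^sub>R (gf i x - DF x) + (1 - \<kappa>) *\<^sub>R (y i - ybar)" if "i < N" for i
    using that unfolding ybar_eq by (simp add: sample_noise_def pad_grads_def y_def algebra_simps)
  have "(\<Sum>i<N. (norm (sample_noise x dd i))\<^sup>2)
      \<le> (\<Sum>i<N. 2 * \<kappa>\<^sup>2 * (norm (gf i x - DF x))\<^sup>2 + 2 * (1 - \<kappa>)\<^sup>2 * (norm (y i - ybar))\<^sup>2)"
  proof (intro sum_mono)
    fix i assume "i \<in> {..<N}"
    then show "(norm (sample_noise x dd i))\<^sup>2
        \<le> 2 * \<kappa>\<^sup>2 * (norm (gf i x - DF x))\<^sup>2 + 2 * (1 - \<kappa>)\<^sup>2 * (norm (y i - ybar))\<^sup>2"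
      using power2_norm_add_le[of "\<kappa> *\<^sub>R (gf i x - DF x)" "(1 - \<kappa>) *\<^sub>R (y i - ybar)"]
      by (simp add: split power_mult_distrib)
  qed
  also have "\<dots> = 2 * \<kappa>\<^sup>2 * (\<Sum>i<N. (norm (gf i x - DF x))\<^sup>2) + 2 * (1 - \<kappa>)\<^sup>2 * (\<Sum>i<N. (norm (y i - ybar))\<^sup>2)"
    by (simp add: sum.distrib sum_distrib_left)
  also have "\<dots> \<le> 2 * \<kappa>\<^sup>2 * (real N * \<sigma>SGD\<^sup>2) + 2 * (1 - \<kappa>)\<^sup>2 * (real N * (L\<^sup>2 * (norm dd)\<^sup>2))"
  proof (intro add_mono mult_left_mono)
    show "(\<Sum>i<N. (norm (gf i x - DF x))\<^sup>2) \<le> real N * \<sigma>SGD\<^sup>2"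
      using variance[of x] N_pos by (simp add: field_simps)
    have "(norm (y i))\<^sup>2 \<le> L\<^sup>2 * (norm dd)\<^sup>2" if "i < N" for i
      using power_mono[OF lipschitz[OF that, of x "x - dd"], of 2] by (simp add: y_def power_mult_distrib)
    then have "(\<Sum>i<N. (norm (y i))\<^sup>2) \<le> real N * (L\<^sup>2 * (norm dd)\<^sup>2)"
      using sum_mono[of "{..<N}" "\<lambda>i. (norm (y i))\<^sup>2" "\<lambda>_. L\<^sup>2 * (norm dd)\<^sup>2"] by simp
    then show "(\<Sum>i<N. (norm (y i - ybar))\<^sup>2) \<le> real N * (L\<^sup>2 * (norm dd)\<^sup>2)"
      using sum_sq_norm_diff_mean_le[OF N_pos, of y] unfolding ybar_def by linarith
  qed auto
  finally show ?thesis using N_pos by (simp add: field_simps)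
qed

lemma integral_sq_step_error:
  fixes x gt dd :: "real^'n"
  shows "integrable (step_space N B \<sigma>) (\<lambda>z. (norm (step_error (x, gt, dd) z))\<^sup>2)"
    and "(\<integral>z. (norm (step_error (x, gt, dd) z))\<^sup>2 \<partial>step_space N B \<sigma>)
           \<le> (1 - \<kappa>)\<^sup>2 * (norm (gt - DF (x - dd)))\<^sup>2 + 2 * \<kappa>\<^sup>2 * real CARD('n) * \<sigma>\<^sup>2 + 2 * L\<^sup>2 * (norm dd)\<^sup>2"
proof -
  let ?m2 = "(\<Sum>i<N. (norm (sample_noise x dd i))\<^sup>2) / real N"
  note moments = step_space_sq_norm[OF N_pos \<sigma>_pos sum_sample_noise norm_sample_noise_le,
      where a="(1 - \<kappa>) *\<^sub>R (gt - DF (x - dd))" and s="1 / real B" and c=\<kappa> and B=B]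
  have error_eq: "step_error (x, gt, dd) = (\<lambda>z. (1 - \<kappa>) *\<^sub>R (gt - DF (x - dd))
      + (1 / real B) *\<^sub>R (\<Sum>j<B. sample_noise x dd (fst z j)) + \<kappa> *\<^sub>R vec_lambda (snd z))"
    by (simp add: step_error_def fun_eq_iff)
  show "integrable (step_space N B \<sigma>) (\<lambda>z. (norm (step_error (x, gt, dd) z))\<^sup>2)"
    unfolding error_eq by (rule moments(1))
  have "?m2 / real B \<le> (2 * \<kappa>\<^sup>2 * \<sigma>SGD\<^sup>2 + 2 * (1 - \<kappa>)\<^sup>2 * L\<^sup>2 * (norm dd)\<^sup>2) / real B"
    using divide_right_mono[OF mean_sq_sample_noise_le[of x dd], of "real B"] by simp
  also have "\<dots> \<le> \<kappa>\<^sup>2 * real CARD('n) * \<sigma>\<^sup>2 + 2 * (1 - \<kappa>)\<^sup>2 * L\<^sup>2 * (norm dd)\<^sup>2"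
  proof -
    have "2 * \<kappa>\<^sup>2 * \<sigma>SGD\<^sup>2 / real B \<le> \<kappa>\<^sup>2 * real CARD('n) * \<sigma>\<^sup>2"
      using mult_left_mono[OF batch_large, of "\<kappa>\<^sup>2"] B_pos by (simp add: field_simps)
    moreover have "2 * (1 - \<kappa>)\<^sup>2 * L\<^sup>2 * (norm dd)\<^sup>2 / real B \<le> 2 * (1 - \<kappa>)\<^sup>2 * L\<^sup>2 * (norm dd)\<^sup>2"
      using divide_left_mono[of 1 "real B" "2 * (1 - \<kappa>)\<^sup>2 * L\<^sup>2 * (norm dd)\<^sup>2"] B_pos by simp
    ultimately show ?thesis by (simp add: add_divide_distrib)
  qed
  also have "\<dots> \<le> \<kappa>\<^sup>2 * real CARD('n) * \<sigma>\<^sup>2 + 2 * L\<^sup>2 * (norm dd)\<^sup>2"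
    using \<kappa>_pos \<kappa>_le_1 by (simp add: power_le_one mult_left_le_one_le)
  finally have "?m2 / real B \<le> \<kappa>\<^sup>2 * real CARD('n) * \<sigma>\<^sup>2 + 2 * L\<^sup>2 * (norm dd)\<^sup>2" .
  moreover have "(1 / real B)\<^sup>2 * real B * ?m2 = ?m2 / real B"
    using B_pos by (simp add: power2_eq_square)
  ultimately show "(\<integral>z. (norm (step_error (x, gt, dd) z))\<^sup>2 \<partial>step_space N B \<sigma>)
      \<le> (1 - \<kappa>)\<^sup>2 * (norm (gt - DF (x - dd)))\<^sup>2 + 2 * \<kappa>\<^sup>2 * real CARD('n) * \<sigma>\<^sup>2 + 2 * L\<^sup>2 * (norm dd)\<^sup>2"
    unfolding error_eq moments(2) by (simp add: power_mult_distrib mult_ac)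
qed

lemma prob_space_step: "prob_space (step_space N B \<sigma> :: ((nat \<Rightarrow> nat) \<times> ('n \<Rightarrow> real)) measure)"
  using prob_space_step_space[OF \<sigma>_pos N_pos] .

definition noise_level :: real where
  "noise_level = 2 * (\<eta> / 2 + A) * \<kappa>\<^sup>2 * real CARD('n) * \<sigma>\<^sup>2"

lemma noise_level_nonneg: "noise_level \<ge> 0"
  using A_nonneg \<eta>_pos by (simp add: noise_level_def)

definition descent_gain :: "(real^'n) \<times> (real^'n) \<times> (real^'n) \<Rightarrow> real" where
  "descent_gain s = \<eta> / 2 * (norm (DF (fst s)))\<^sup>2"

lemma lyapunov_step_majorant:
  obtains Q where "\<And>z. lyapunov (disk_step pgf \<eta> (-1) \<kappa> C B s z) \<le> Q z"
    and "integrable (step_space N B \<sigma>) Q"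
    and "integral\<^sup>L (step_space N B \<sigma>) Q + descent_gain s \<le> lyapunov s + noise_level"
proof -
  obtain x gt dd where s: "s = (x, gt, dd)" by (cases s) auto
  define R where "R = F x - Fs - \<eta> / 2 * (norm (DF x))\<^sup>2"
  define Q where "Q z = R + (\<eta> / 2 + A) * (norm (step_error s z))\<^sup>2" for z
  have const: "integrable (step_space N B \<sigma>) (\<lambda>_ :: (nat \<Rightarrow> nat) \<times> ('n \<Rightarrow> real). R)"
    by (rule finite_measure.integrable_const[OF prob_space.axioms(1)[OF prob_space_step]])
  have "integral\<^sup>L (step_space N B \<sigma>) Q
      = R + (\<eta> / 2 + A) * (\<integral>z. (norm (step_error s z))\<^sup>2 \<partial>step_space N B \<sigma>)"
    unfolding Q_def s using integral_sq_step_error(1) const prob_space.prob_space[OF prob_space_step]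
    by (subst Bochner_Integration.integral_add) auto
  also have "\<dots> \<le> R + (\<eta> / 2 + A) * ((1 - \<kappa>)\<^sup>2 * (norm (gt - DF (x - dd)))\<^sup>2
      + 2 * \<kappa>\<^sup>2 * real CARD('n) * \<sigma>\<^sup>2 + 2 * L\<^sup>2 * (norm dd)\<^sup>2)"
    unfolding s using integral_sq_step_error(2) A_nonneg \<eta>_pos by (intro add_left_mono mult_left_mono) auto
  also have "\<dots> \<le> lyapunov s + noise_level - descent_gain s"
    using mult_right_mono[OF A_contraction, of "(norm (gt - DF (x - dd)))\<^sup>2"]
    by (simp add: s R_def lyapunov_def noise_level_def descent_gain_def algebra_simps)
  finally have "integral\<^sup>L (step_space N B \<sigma>) Q + descent_gain s \<le> lyapunov s + noise_level"
    by simp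
  moreover have "lyapunov (disk_step pgf \<eta> (-1) \<kappa> C B s z) \<le> Q z" for z
    using lyapunov_disk_step_le[of s z] by (simp add: Q_def R_def s)
  moreover have "integrable (step_space N B \<sigma>) Q"
    unfolding Q_def s using integral_sq_step_error(1) const
    by (intro Bochner_Integration.integrable_add Bochner_Integration.integrable_mult_right)
  ultimately show ?thesis by (intro that)
qed

lemma nn_integral_lyapunov_step:
  "(\<integral>\<^sup>+z. ennreal (lyapunov (disk_step pgf \<eta> (-1) \<kappa> C B s z)) \<partial>step_space N B \<sigma>)
     + ennreal (descent_gain s) \<le> ennreal (lyapunov s + noise_level)"
proof -
  obtain Q where W_le_Q: "\<And>z. lyapunov (disk_step pgf \<eta> (-1) \<kappa> C B s z) \<le> Q z"
    and Q_integrable: "integrable (step_space N B \<sigma>) Q"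
    and Q_bound: "integral\<^sup>L (step_space N B \<sigma>) Q + descent_gain s \<le> lyapunov s + noise_level"
    using lyapunov_step_majorant[where s = s] by blast
  have Q_nonneg: "0 \<le> Q z" for z using lyapunov_nonneg W_le_Q[of z] by (rule order_trans)
  have gain_nonneg: "0 \<le> descent_gain s" using \<eta>_pos by (simp add: descent_gain_def)
  have "(\<integral>\<^sup>+z. ennreal (lyapunov (disk_step pgf \<eta> (-1) \<kappa> C B s z)) \<partial>step_space N B \<sigma>)
      \<le> (\<integral>\<^sup>+z. ennreal (Q z) \<partial>step_space N B \<sigma>)"
    by (intro nn_integral_mono ennreal_leI W_le_Q)
  also have "\<dots> = ennreal (integral\<^sup>L (step_space N B \<sigma>) Q)"
    using Q_integrable Q_nonneg by (intro nn_integral_eq_integral) auto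
  finally have "(\<integral>\<^sup>+z. ennreal (lyapunov (disk_step pgf \<eta> (-1) \<kappa> C B s z)) \<partial>step_space N B \<sigma>)
      + ennreal (descent_gain s) \<le> ennreal (integral\<^sup>L (step_space N B \<sigma>) Q + descent_gain s)"
    using Q_nonneg gain_nonneg by (simp add: ennreal_plus Bochner_Integration.integral_nonneg add_right_mono)
  also have "\<dots> \<le> ennreal (lyapunov s + noise_level)"
    using Q_bound by (rule ennreal_leI)
  finally show ?thesis .
qed

lemma borel_measurable_pgf[measurable]: "pgf i \<in> borel_measurable borel"
proof (cases "i < N")
  case True
  have "continuous_on UNIV (gf i)"
    using lipschitz[OF True] L_nonneg by (intro lipschitz_on_continuous_on[of L] lipschitz_onI) (auto simp: dist_norm)
  then show ?thesis using True by (simp add: pad_grads_def borel_measurable_continuous_onI)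
next
  case False
  then have "pgf i = (\<lambda>_. 0)" by (simp add: pad_grads_def fun_eq_iff)
  then show ?thesis by simp
qed

lemma borel_measurable_DF[measurable]: "DF \<in> borel_measurable borel"
proof -
  have "continuous_on UNIV DF"
    using gradF_lipschitz[OF N_pos lipschitz] L_nonneg
    by (intro lipschitz_on_continuous_on[of L] lipschitz_onI) (auto simp: dist_norm)
  then show ?thesis by (rule borel_measurable_continuous_onI)
qed

lemma borel_measurable_F[measurable]: "F \<in> borel_measurable borel"
proof -
  have "continuous_on UNIV F"
    using F_has_derivative by (intro continuous_at_imp_continuous_on) (auto intro: has_derivative_continuous)
  then show ?thesis by (rule borel_measurable_continuous_onI)
qed

lemma borel_measurable_lyapunov[measurable]: "lyapunov \<in> borel_measurable borel"
  unfolding lyapunov_def borel_prod[symmetric] by measurable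

abbreviation \<Omega> :: "(nat \<Rightarrow> (nat \<Rightarrow> nat) \<times> ('n \<Rightarrow> real)) measure" where
  "\<Omega> \<equiv> omega_space N B \<sigma>"

abbreviation "run \<equiv> disk_run pgf \<eta> (-1) \<kappa> C B"

lemma prob_space_\<Omega>: "prob_space \<Omega>"
  using prob_space_omega_space[OF \<sigma>_pos N_pos] .

lemma measurable_run[measurable]: "(\<lambda>\<omega>. run s \<omega> t) \<in> borel_measurable \<Omega>"
  by (rule measurable_disk_run) simp

lemma measurable_run_fst[measurable]: "(\<lambda>\<omega>. fst (run s \<omega> t)) \<in> borel_measurable \<Omega>"
  using measurable_run unfolding borel_prod[symmetric] by measurable

definition telescoped_lyapunov
    :: "nat \<Rightarrow> (real^'n) \<times> (real^'n) \<times> (real^'n) \<Rightarrow> (nat \<Rightarrow> (nat \<Rightarrow> nat) \<times> ('n \<Rightarrow> real)) \<Rightarrow> ennreal" where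
  "telescoped_lyapunov n s \<omega> = ennreal (lyapunov (run s \<omega> n)) + (\<Sum>t<n. ennreal (descent_gain (run s \<omega> t)))"

lemma measurable_telescoped_lyapunov[measurable]: "telescoped_lyapunov n s \<in> borel_measurable \<Omega>"
  unfolding telescoped_lyapunov_def descent_gain_def by measurable

lemma telescoped_lyapunov_Suc_case_nat:
  "telescoped_lyapunov (Suc n) s (case_nat z \<omega>)
     = ennreal (descent_gain s) + telescoped_lyapunov n (disk_step pgf \<eta> (-1) \<kappa> C B s z) \<omega>"
  unfolding telescoped_lyapunov_def sum.lessThan_Suc_shift disk_run_case_nat by (simp add: add_ac)

lemma measurable_lyapunov_disk_step:
  "(\<lambda>z. lyapunov (disk_step pgf \<eta> (-1) \<kappa> C B s z)) \<in> borel_measurable (step_space N B \<sigma>)"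
  by (intro measurable_compose[OF measurable_disk_step borel_measurable_lyapunov] measurable_ident_sets) simp_all

lemma nn_integral_telescoped_lyapunov:
  "(\<integral>\<^sup>+\<omega>. telescoped_lyapunov n s \<omega> \<partial>\<Omega>) \<le> ennreal (lyapunov s + real n * noise_level)"
proof (induction n arbitrary: s)
  case 0
  show ?case using prob_space.emeasure_space_1[OF prob_space_\<Omega>] by (simp add: telescoped_lyapunov_def)
next
  case (Suc n)
  let ?step = "disk_step pgf \<eta> (-1) \<kappa> C B s"
  let ?gain = "ennreal (descent_gain s)" and ?K = "ennreal (real n * noise_level)"
  have "(\<integral>\<^sup>+\<omega>. telescoped_lyapunov (Suc n) s \<omega> \<partial>\<Omega>)
      = (\<integral>\<^sup>+z. (\<integral>\<^sup>+\<omega>. telescoped_lyapunov (Suc n) s (case_nat z \<omega>) \<partial>\<Omega>) \<partial>step_space N B \<sigma>)"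
    unfolding omega_space_def
    by (rule nn_integral_sequence_space_case_nat[OF prob_space_step]) (simp add: omega_space_def[symmetric])
  also have "\<dots> = (\<integral>\<^sup>+z. ?gain + (\<integral>\<^sup>+\<omega>. telescoped_lyapunov n (?step z) \<omega> \<partial>\<Omega>) \<partial>step_space N B \<sigma>)"
    unfolding telescoped_lyapunov_Suc_case_nat using prob_space.emeasure_space_1[OF prob_space_\<Omega>]
    by (subst nn_integral_add) simp_all
  also have "\<dots> \<le> (\<integral>\<^sup>+z. ?gain + (ennreal (lyapunov (?step z)) + ?K) \<partial>step_space N B \<sigma>)"
    using Suc.IH lyapunov_nonneg noise_level_nonneg
    by (intro nn_integral_mono add_left_mono) (simp add: ennreal_plus)
  also have "\<dots> = ?gain + (\<integral>\<^sup>+z. ennreal (lyapunov (?step z)) \<partial>step_space N B \<sigma>) + ?K"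
    using measurable_lyapunov_disk_step prob_space.emeasure_space_1[OF prob_space_step]
    by (simp add: nn_integral_add add.assoc)
  also have "\<dots> \<le> ennreal (lyapunov s + noise_level) + ?K"
    using nn_integral_lyapunov_step[of s] by (simp add: add_right_mono add.commute)
  also have "\<dots> = ennreal (lyapunov s + real (Suc n) * noise_level)"
  proof -
    have "ennreal (lyapunov s + noise_level) + ?K = ennreal (lyapunov s + noise_level + real n * noise_level)"
      using lyapunov_nonneg[of s] noise_level_nonneg by (intro ennreal_plus[symmetric]) auto
    then show ?thesis by (simp add: algebra_simps)
  qed
  finally show ?case .
qed

lemma sum_integral_sq_grad_run:
  "(\<Sum>t<n. \<integral>\<omega>. (norm (DF (fst (run s \<omega> t))))\<^sup>2 \<partial>\<Omega>) \<le> 2 / \<eta> * (lyapunov s + real n * noise_level)"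
proof -
  define q where "q t \<omega> = descent_gain (run s \<omega> t)" for t \<omega>
  have q_nonneg: "0 \<le> q t \<omega>" for t \<omega> using \<eta>_pos by (simp add: q_def descent_gain_def)
  have q_measurable: "q t \<in> borel_measurable \<Omega>" for t
    unfolding q_def descent_gain_def by measurable
  have q_integrable: "integrable \<Omega> (q t)" for t
  proof (rule finite_measure.integrable_const_bound[OF prob_space.axioms(1)[OF prob_space_\<Omega>] _ q_measurable])
    show "AE \<omega> in \<Omega>. norm (q t \<omega>) \<le> \<eta> / 2 * G\<^sup>2"
      using \<eta>_pos norm_DF_le by (intro AE_I2) (simp add: q_def descent_gain_def power_mono)
  qed
  have nn_q: "(\<integral>\<^sup>+\<omega>. ennreal (q t \<omega>) \<partial>\<Omega>) = ennreal (integral\<^sup>L \<Omega> (q t))" for t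
    using nn_integral_eq_integral[OF q_integrable] q_nonneg by simp
  have "ennreal (\<Sum>t<n. integral\<^sup>L \<Omega> (q t)) = (\<Sum>t<n. ennreal (integral\<^sup>L \<Omega> (q t)))"
    using q_nonneg by (intro sum_ennreal[symmetric] Bochner_Integration.integral_nonneg) auto
  also have "\<dots> = (\<integral>\<^sup>+\<omega>. (\<Sum>t<n. ennreal (q t \<omega>)) \<partial>\<Omega>)"
    using q_measurable by (subst nn_integral_sum) (auto simp: nn_q)
  also have "\<dots> \<le> (\<integral>\<^sup>+\<omega>. telescoped_lyapunov n s \<omega> \<partial>\<Omega>)"
    by (intro nn_integral_mono) (simp add: telescoped_lyapunov_def q_def)
  also have "\<dots> \<le> ennreal (lyapunov s + real n * noise_level)"
    by (rule nn_integral_telescoped_lyapunov)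
  finally have "(\<Sum>t<n. integral\<^sup>L \<Omega> (q t)) \<le> lyapunov s + real n * noise_level"
    using lyapunov_nonneg[of s] noise_level_nonneg by (subst (asm) ennreal_le_iff) auto
  moreover have "integral\<^sup>L \<Omega> (q t) = \<eta> / 2 * (\<integral>\<omega>. (norm (DF (fst (run s \<omega> t))))\<^sup>2 \<partial>\<Omega>)" for t
    unfolding q_def descent_gain_def by simp
  ultimately have "\<eta> / 2 * (\<Sum>t<n. \<integral>\<omega>. (norm (DF (fst (run s \<omega> t))))\<^sup>2 \<partial>\<Omega>)
      \<le> lyapunov s + real n * noise_level"
    by (simp add: sum_distrib_left)
  then show ?thesis using \<eta>_pos by (simp add: field_simps)
qed

lemma sum_integral_sq_grad_disk_x:
  "(\<Sum>t<n. \<integral>\<omega>. (norm (DF (disk_x gf x0 \<eta> (-1) \<kappa> C B \<omega> t)))\<^sup>2 \<partial>\<Omega>)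
     \<le> 2 / \<eta> * (F x0 - Fs + A * (norm (DF x0))\<^sup>2 + real n * noise_level)"
proof -
  have "(\<integral>\<omega>. (norm (DF (disk_x gf x0 \<eta> (-1) \<kappa> C B \<omega> t)))\<^sup>2 \<partial>\<Omega>)
      \<le> (\<integral>\<omega>. (norm (DF (fst (run (x0, 0, 0) \<omega> t))))\<^sup>2 \<partial>\<Omega>)" for t
  proof (rule integral_le_if_AE_eq)
    show "AE \<omega> in \<Omega>. (norm (DF (disk_x gf x0 \<eta> (-1) \<kappa> C B \<omega> t)))\<^sup>2 = (norm (DF (fst (run (x0, 0, 0) \<omega> t))))\<^sup>2"
      using AE_batch_indices_in_range[OF N_pos \<sigma>_pos]
      by eventually_elim (simp add: disk_x_def disk_state_eq_disk_run disk_run_pad_grads[where gf=gf])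
  qed (simp_all add: Bochner_Integration.integral_nonneg)
  then have "(\<Sum>t<n. \<integral>\<omega>. (norm (DF (disk_x gf x0 \<eta> (-1) \<kappa> C B \<omega> t)))\<^sup>2 \<partial>\<Omega>)
      \<le> (\<Sum>t<n. \<integral>\<omega>. (norm (DF (fst (run (x0, 0, 0) \<omega> t))))\<^sup>2 \<partial>\<Omega>)"
    by (rule sum_mono)
  also have "\<dots> \<le> 2 / \<eta> * (lyapunov (x0, 0, 0) + real n * noise_level)"
    by (rule sum_integral_sq_grad_run)
  finally show ?thesis by (simp add: lyapunov_def)
qed

end

section \<open>The parameter choice of the corollary\<close>

lemma step_size_le:
  fixes L Mk \<eta> :: real
  assumes "L > 0" and "0 < Mk" and "Mk \<le> 1" and "\<eta> \<le> 1 / (L * (2 + 4 / Mk - Mk))"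
  shows "L * \<eta> \<le> Mk / 4"
proof -
  have c: "4 / Mk \<le> 2 + 4 / Mk - Mk" and "0 < 4 / Mk" using assms(2,3) by simp_all
  then have "L * \<eta> \<le> 1 / (2 + 4 / Mk - Mk)"
    using mult_left_mono[OF assms(4), of L] assms(1) by simp
  also have "\<dots> \<le> 1 / (4 / Mk)"
    using c \<open>0 < 4 / Mk\<close> by (intro divide_left_mono mult_pos_pos) linarith+
  finally show ?thesis by simp
qed

lemma momentum_le_quarter:
  fixes L Mk \<eta> \<kappa> :: real
  assumes "0 < Mk" and "Mk \<le> 1" and "\<kappa> = Mk * L * \<eta>" and "L * \<eta> \<le> Mk / 4"
  shows "\<kappa> \<le> 1 / 4"
proof -
  have "\<kappa> \<le> Mk * (Mk / 4)" using assms by (simp add: mult_left_mono mult.assoc)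
  also have "\<dots> \<le> 1 / 4" using assms(1,2) by (simp add: mult_le_one)
  finally show ?thesis .
qed

lemma momentum_contraction:
  fixes \<eta> \<kappa> :: real
  assumes "\<eta> > 0" and "0 < \<kappa>" and "\<kappa> \<le> 1 / 4"
  shows "(\<eta> / 2 + \<eta> / (4 * \<kappa>)) * (1 - \<kappa>)\<^sup>2 \<le> \<eta> / (4 * \<kappa>)"
proof -
  have "(\<eta> / 2 + \<eta> / (4 * \<kappa>)) * (1 - \<kappa>)\<^sup>2 = \<eta> / (4 * \<kappa>) * (1 - \<kappa>\<^sup>2 * (3 - 2 * \<kappa>))"
    using assms(2) by (simp add: field_simps power2_eq_square)
  also have "\<dots> \<le> \<eta> / (4 * \<kappa>) * 1"
    using assms by (intro mult_left_mono) auto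
  finally show ?thesis by simp
qed

lemma step_size_small:
  fixes L Mk \<eta> \<kappa> :: real
  assumes "L > 0" and "0 < Mk" and "\<eta> > 0" and "\<kappa> = Mk * L * \<eta>" and "L * \<eta> \<le> Mk / 4" and "Mk \<le> 1"
  shows "2 * (\<eta> / 2 + \<eta> / (4 * \<kappa>)) * L\<^sup>2 * \<eta>\<^sup>2 \<le> \<eta> / 2 - L * \<eta>\<^sup>2"
proof -
  define u where "u = L * \<eta>"
  have u: "0 < u" "u \<le> 1 / 4" "u / (2 * Mk) \<le> 1 / 8"
    using assms by (auto simp: u_def field_simps)
  have "2 * (\<eta> / 2 + \<eta> / (4 * \<kappa>)) * L\<^sup>2 * \<eta>\<^sup>2 + L * \<eta>\<^sup>2 = \<eta> * (u\<^sup>2 + u / (2 * Mk) + u)"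
    using assms(1-4) by (simp add: u_def field_simps power2_eq_square)
  also have "\<dots> \<le> \<eta> * (1 / 16 + 1 / 8 + 1 / 4)"
    using u power_mono[of u "1 / 4" 2] assms(3)
    by (intro mult_left_mono add_mono) (auto simp: power2_eq_square)
  finally show ?thesis using assms(3) by simp
qed

lemma noise_term_le:
  fixes L Mk \<eta> \<kappa> g0 T D :: real
  assumes "0 < Mk" and "L > 0" and "T > 0" and "D > 0" and "g0 \<ge> 0"
    and "\<eta> \<le> sqrt (g0 / (T * D)) / (Mk * L)" and \<kappa>: "\<kappa> = Mk * L * \<eta>" "0 < \<kappa>" "\<kappa> \<le> 1 / 4"
  shows "(2 * \<kappa>\<^sup>2 + \<kappa>) * D \<le> 3 / 2 * sqrt (g0 * D / T)"
proof -
  have "2 * \<kappa>\<^sup>2 + \<kappa> \<le> 3 / 2 * \<kappa>"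
    using mult_left_mono[OF \<kappa>(3), of "2 * \<kappa>"] \<kappa>(2) by (simp add: power2_eq_square)
  then have "(2 * \<kappa>\<^sup>2 + \<kappa>) * D \<le> 3 / 2 * (\<kappa> * D)"
    using assms(4) by (simp add: mult_right_mono mult.assoc[symmetric])
  also have "\<kappa> \<le> sqrt (g0 / (T * D))"
    using mult_left_mono[OF assms(6), of "Mk * L"] assms(1,2) \<kappa>(1) by simp
  then have "\<kappa> * D \<le> sqrt (g0 / (T * D)) * sqrt (D * D)"
    using assms(4) by (simp add: mult_right_mono)
  also have "\<dots> = sqrt (g0 / (T * D) * (D * D))"
    by (simp only: real_sqrt_mult)
  also have "g0 / (T * D) * (D * D) = g0 * D / T"
    using assms(3,4) by (simp add: field_simps)
  finally show ?thesis by simp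
qed

lemma gap_over_step_le:
  fixes L Dl g0 Mk \<eta> T D :: real
  assumes L: "L > 0" and Dl: "Dl > 0" and g0: "g0 = 2 * Mk * L * Dl" and Mk: "0 < Mk"
    and T: "T > 0" and D: "D > 0"
    and \<eta>: "\<eta> = min (1 / (L * (2 + 4 / Mk - Mk))) (sqrt (g0 / (T * D)) / (Mk * L))"
    and T_ge: "T \<ge> (2 * L * Dl * (16 / Mk ^ 3 + 16 / Mk\<^sup>2 - 4 / Mk - 4) + g0) / D"
  shows "Dl / (\<eta> * T) \<le> sqrt (g0 * D / T) / 2"
proof (rule power2_le_imp_le)
  define c where "c = 2 + 4 / Mk - Mk"
  have S2: "(sqrt (g0 * D / T) / 2)\<^sup>2 = Mk * L * Dl * D / (2 * T)"
    using g0 L Dl Mk T D by (simp add: power_divide)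
  show "(Dl / (\<eta> * T))\<^sup>2 \<le> (sqrt (g0 * D / T) / 2)\<^sup>2"
  proof (cases "\<eta> = 1 / (L * c)")
    case True
    have c2: "c\<^sup>2 / Mk = 16 / Mk ^ 3 + 16 / Mk\<^sup>2 - 4 / Mk - 4 + Mk"
      unfolding c_def using Mk by (simp add: field_simps power2_eq_square power3_eq_cube)
    have "2 * L * Dl * (16 / Mk ^ 3 + 16 / Mk\<^sup>2 - 4 / Mk - 4) + g0 \<le> T * D"
      using T_ge D by (simp add: field_simps)
    also have "2 * L * Dl * (16 / Mk ^ 3 + 16 / Mk\<^sup>2 - 4 / Mk - 4) + g0 = 2 * L * Dl * (c\<^sup>2 / Mk)"
      unfolding c2 g0 by (simp add: algebra_simps)
    finally have "2 * L * Dl * (c\<^sup>2 / Mk) \<le> T * D" .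
    then have "Dl\<^sup>2 * L\<^sup>2 * c\<^sup>2 / T\<^sup>2 \<le> (L * Dl / (2 * T\<^sup>2)) * (T * D) * Mk"
      using L Dl T Mk mult_left_mono[of "2 * L * Dl * (c\<^sup>2 / Mk)" "T * D" "L * Dl * Mk / (2 * T\<^sup>2)"]
      by (simp add: field_simps power2_eq_square)
    then show ?thesis
      unfolding S2 True using L T by (simp add: field_simps power2_eq_square)
  next
    case False
    then have \<eta>2: "\<eta> = sqrt (g0 / (T * D)) / (Mk * L)" using \<eta> by (simp add: c_def min_def split: if_splits)
    have "g0 \<ge> 0" using g0 L Dl Mk by simp
    then have "(Dl / (\<eta> * T))\<^sup>2 = Dl\<^sup>2 * (Mk * L)\<^sup>2 / ((g0 / (T * D)) * T\<^sup>2)"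
      unfolding \<eta>2 using Mk L T D by (simp add: power_divide power_mult_distrib field_simps)
    also have "\<dots> = (sqrt (g0 * D / T) / 2)\<^sup>2"
      unfolding S2 g0 using T D Mk L Dl by (simp add: field_simps power2_eq_square)
    finally show ?thesis by simp
  qed
qed (use g0 L Dl Mk T D in simp)

lemma corollary_parameters_pos:
  fixes L Dl g0 Mk \<eta> \<kappa> e X d s :: real and T :: nat
  assumes L: "L \<ge> 0" and Dl: "Dl > 0" and g0: "g0 \<ge> 0" and \<kappa>: "\<kappa> > 0"
    and Mk: "Mk = g0 / (2 * L * Dl)" and \<kappa>_def: "\<kappa> = Mk * L * \<eta>"
    and \<eta>: "\<eta> = min e (1 / (Mk * L) * sqrt (X / (2 * real T * d * s)))"
  shows "L > 0" and "Mk > 0" and "\<eta> > 0" and "T \<ge> 1"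
proof -
  have "L \<noteq> 0" "Mk \<noteq> 0" using \<kappa> \<kappa>_def by auto
  moreover have "Mk \<ge> 0" using Mk L Dl g0 by simp
  ultimately show "L > 0" "Mk > 0" using L by auto
  then show \<eta>_pos: "\<eta> > 0"
    using \<kappa> unfolding \<kappa>_def by (metis mult_pos_pos zero_less_mult_pos)
  show "T \<ge> 1"
  proof (rule ccontr)
    assume "\<not> T \<ge> 1"
    \<comment> \<open>then the second step size divides by zero and is \<open>sqrt 0 = 0\<close>\<close>
    then have "T = 0" by simp
    then have "\<eta> \<le> 0" using \<eta> by simp
    then show False using \<eta>_pos by simp
  qed
qed

lemma disk_rate_bound:
  fixes L Dl g0 Mk \<eta> \<kappa> T D :: real
  assumes L: "L > 0" and Dl: "Dl > 0" and g0: "g0 = 2 * Mk * L * Dl" and Mk: "0 < Mk" "Mk \<le> 1"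
    and T: "T \<ge> 1" and D: "D > 0"
    and \<eta>: "\<eta> = min (1 / (L * (2 + 4 / Mk - Mk))) (1 / (Mk * L) * sqrt ((2 * Mk * L * Dl + g0) / (2 * T * D)))"
    and \<kappa>: "\<kappa> = Mk * L * \<eta>"
    and T_ge: "T \<ge> (2 * L * Dl * (16 / Mk ^ 3 + 16 / Mk\<^sup>2 - 4 / Mk - 4) + g0) / D"
  shows "1 / T * (2 / \<eta> * (Dl + \<eta> / (4 * \<kappa>) * g0 + (T + 1) * (2 * (\<eta> / 2 + \<eta> / (4 * \<kappa>)) * \<kappa>\<^sup>2 * D)))
         \<le> 8 * sqrt (Mk * L * Dl * D / T)"
proof -
  define S where "S = sqrt (g0 * D / T)"
  have \<eta>': "\<eta> = min (1 / (L * (2 + 4 / Mk - Mk))) (sqrt (g0 / (T * D)) / (Mk * L))"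
  proof -
    have "(2 * Mk * L * Dl + g0) / (2 * T * D) = g0 / (T * D)" using g0 T D by (simp add: field_simps)
    then show ?thesis using \<eta> by simp
  qed
  have "4 / Mk \<ge> 4" using Mk by (simp add: field_simps)
  then have "0 < L * (2 + 4 / Mk - Mk)" using L Mk by simp
  then have \<eta>_pos: "\<eta> > 0" unfolding \<eta>' using L Mk T D g0 Dl by simp
  have \<kappa>_pos: "\<kappa> > 0" unfolding \<kappa> using Mk L \<eta>_pos by simp
  have "L * \<eta> \<le> Mk / 4" using step_size_le[OF L Mk] \<eta> by simp
  then have \<kappa>_le: "\<kappa> \<le> 1 / 4" using momentum_le_quarter[OF Mk \<kappa>] by simp
  have "1 / T * (2 / \<eta> * (Dl + \<eta> / (4 * \<kappa>) * g0 + (T + 1) * (2 * (\<eta> / 2 + \<eta> / (4 * \<kappa>)) * \<kappa>\<^sup>2 * D)))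
      = 3 * (Dl / (\<eta> * T)) + ((T + 1) / T) * ((2 * \<kappa>\<^sup>2 + \<kappa>) * D)"
    using \<eta>_pos \<kappa>_pos T Mk L unfolding g0 \<kappa> by (simp add: field_simps power2_eq_square)
  also have "\<dots> \<le> 3 * (S / 2) + 2 * (3 / 2 * S)"
  proof -
    have gap: "Dl / (\<eta> * T) \<le> S / 2"
      unfolding S_def using T by (intro gap_over_step_le[OF L Dl g0 Mk(1) _ D \<eta>' T_ge]) simp
    have noise: "(2 * \<kappa>\<^sup>2 + \<kappa>) * D \<le> 3 / 2 * S"
      unfolding S_def using L Mk T D g0 Dl \<eta>' \<kappa> \<kappa>_pos \<kappa>_le by (intro noise_term_le) auto
    have "(T + 1) / T \<le> 2" using T by (simp add: field_simps)
    then have "((T + 1) / T) * ((2 * \<kappa>\<^sup>2 + \<kappa>) * D) \<le> 2 * (3 / 2 * S)"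
      by (rule mult_mono) (use noise \<kappa>_pos D in auto)
    then show ?thesis using gap by linarith
  qed
  also have "\<dots> = 9 / 2 * sqrt 2 * sqrt (Mk * L * Dl * D / T)"
    unfolding S_def g0 by (simp add: real_sqrt_mult[symmetric] field_simps)
  also have "\<dots> \<le> 8 * sqrt (Mk * L * Dl * D / T)"
    using real_le_lsqrt[of "16 / 9" 2] L Mk Dl D T by (intro mult_right_mono) (auto simp: power2_eq_square)
  finally show ?thesis .
qed

theorem corollary1:
  fixes N B T :: nat
    and f :: "nat \<Rightarrow> real^'n::finite \<Rightarrow> real"
    and gf :: "nat \<Rightarrow> real^'n \<Rightarrow> real^'n"
    and x0 :: "real^'n"
    and L G \<sigma>SGD \<sigma>DP C \<eta> \<kappa> \<beta> Mk M1 :: real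
  defines "F \<equiv> Floss N f" and "Fs \<equiv> Fstar N f" and "d \<equiv> real CARD('n)"
  assumes N_pos: "N \<ge> 1"
    and grad: "\<And>i x. i < N \<Longrightarrow> GDERIV (f i) x :> gf i x"
    and bdd: "bdd_below (range F)"
    and gap: "F x0 > Fs"
    and A1: "\<And>i x y. i < N \<Longrightarrow> norm (gf i x - gf i y) \<le> L * norm (x - y)"
    and A2: "\<And>x. (1 / real N) * (\<Sum>i<N. (norm (gf i x - gradF N gf x))\<^sup>2) \<le> \<sigma>SGD\<^sup>2"
    and A3: "\<And>i x. i < N \<Longrightarrow> norm (gf i x) \<le> G"
    and sigDP: "\<sigma>DP > 0"
    and kap_range: "0 < \<kappa>" "\<kappa> \<le> 1"
    and C_pos: "C > 0"
    and C_ge: "C \<ge> (1 + 2 * (1 - \<kappa>) / \<kappa>) * G"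
    and Mk_def: "Mk = (norm (gradF N gf x0))\<^sup>2 / (2 * L * (F x0 - Fs))"
    and Mk_le: "Mk \<le> 1"
    and eta_def: "\<eta> = min (1 / (L * (2 + 4 / Mk - Mk)))
        (1 / (Mk * L) * sqrt ((2 * Mk * L * (F x0 - Fs) + (norm (gradF N gf x0))\<^sup>2)
                               / (2 * real T * d * \<sigma>DP\<^sup>2)))"
    and kap_def: "\<kappa> = Mk * L * \<eta>"
    and beta_def: "\<beta> = (\<eta> * (1 - \<kappa>) / 2 + \<eta>\<^sup>2 * L * (1 - \<kappa>)\<^sup>2 * (1 + 4 * \<eta>\<^sup>2 * L\<^sup>2))
                    / (1 - (1 - \<kappa>)\<^sup>2 * (1 + 4 * \<eta>\<^sup>2 * L\<^sup>2))"
    and beta_le: "\<beta> \<le> 1 / (2 * Mk * L)"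
    and B_ge: "real B \<ge> max 1 (2 * \<sigma>SGD\<^sup>2 / (d * \<sigma>DP\<^sup>2))"
    and cond1: "\<eta> < (1 + \<kappa>) / (2 * L * (1 + 4 * (1 - \<kappa>)\<^sup>2 * \<beta> * L))"
    and cond2: "\<kappa> > 1 - 1 / sqrt (1 + 4 * \<eta>\<^sup>2 * L\<^sup>2)"
    and M1_def: "M1 = (1 + \<kappa> - 2 * \<eta> * L) - 8 * (\<beta> + \<eta>\<^sup>2 * L) * (1 - \<kappa>)\<^sup>2 * L\<^sup>2 * \<eta>"
    and M1_pos: "M1 > 0"
    and T_ge: "real T \<ge> (2 * L * (F x0 - Fs) * (16 / Mk ^ 3 + 16 / Mk\<^sup>2 - 4 / Mk - 4)
                          + (norm (gradF N gf x0))\<^sup>2) / (d * \<sigma>DP\<^sup>2)"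
  shows "(1 / real T) * (\<Sum>t\<le>T. integral\<^sup>L (omega_space N B \<sigma>DP)
            (\<lambda>\<omega>. (norm (gradF N gf (disk_x gf x0 \<eta> (-1) \<kappa> C B \<omega> t)))\<^sup>2))
         \<le> 8 * sqrt (Mk * L * (F x0 - Fs) * d * \<sigma>DP\<^sup>2 / real T)"
proof -
  define Dl g0 where "Dl = F x0 - Fs" and "g0 = (norm (gradF N gf x0))\<^sup>2"
  have Dl_pos: "Dl > 0" and g0_nonneg: "g0 \<ge> 0" using gap by (simp_all add: Dl_def g0_def)
  have "L \<ge> 0" by (rule lipschitz_family_const_nonneg[OF N_pos]) (rule A1)
  note pos = corollary_parameters_pos[OF this Dl_pos g0_nonneg kap_range(1)
      Mk_def[folded Dl_def g0_def] kap_def eta_def[folded Dl_def g0_def]]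
  have g0_eq: "g0 = 2 * Mk * L * Dl" using Mk_def pos(1) Dl_pos by (simp add: Dl_def g0_def field_simps)
  have L\<eta>: "L * \<eta> \<le> Mk / 4" by (rule step_size_le[OF pos(1,2) Mk_le]) (simp add: eta_def)
  have Fs_le: "Fs \<le> Floss N f x" for x
    unfolding Fs_def Fstar_def using bdd by (intro cInf_lower) (auto simp: F_def)
  have "2 * \<sigma>SGD\<^sup>2 \<le> real B * (real CARD('n) * \<sigma>DP\<^sup>2)"
    using B_ge sigDP by (simp add: d_def field_simps)
  then interpret disk_sgd_analysis N B f gf L G \<sigma>SGD \<sigma>DP C \<eta> \<kappa> Fs "\<eta> / (4 * \<kappa>)"
    using N_pos B_ge sigDP kap_range pos(3) grad A1 A2 A3 Fs_le C_ge
      momentum_contraction[OF pos(3) kap_range(1) momentum_le_quarter[OF pos(2) Mk_le kap_def L\<eta>]]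
      step_size_small[OF pos(1,2,3) kap_def L\<eta> Mk_le]
    by unfold_locales auto
  define bound where "bound = Dl + \<eta> / (4 * \<kappa>) * g0
    + (real T + 1) * (2 * (\<eta> / 2 + \<eta> / (4 * \<kappa>)) * \<kappa>\<^sup>2 * (d * \<sigma>DP\<^sup>2))"
  have sum_bound: "(\<Sum>t\<le>T. \<integral>\<omega>. (norm (gradF N gf (disk_x gf x0 \<eta> (-1) \<kappa> C B \<omega> t)))\<^sup>2 \<partial>omega_space N B \<sigma>DP)
      \<le> 2 / \<eta> * bound"
    using sum_integral_sq_grad_disk_x[of x0 "Suc T"]
    by (simp add: bound_def lessThan_Suc_atMost Dl_def g0_def F_def noise_level_def d_def mult.assoc add.commute)
  have rate: "1 / real T * (2 / \<eta> * bound) \<le> 8 * sqrt (Mk * L * Dl * (d * \<sigma>DP\<^sup>2) / real T)"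
    unfolding bound_def
    by (rule disk_rate_bound[OF pos(1) Dl_pos g0_eq pos(2) Mk_le _ _ _ kap_def])
       (use pos(4) sigDP eta_def T_ge in \<open>simp_all add: Dl_def g0_def d_def mult.assoc\<close>)
  from order_trans[OF mult_left_mono[OF sum_bound] rate] show ?thesis
    by (simp add: Dl_def mult.assoc)
qed

end
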